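(* Let $A,B$ be commutative rings with identity, $f:A\to B$ a ring homomorphism and $J$ an ideal of $B$, regarded as an $A$-module via $f$. Then: (1) for every finitely generated ideal $\mathfrak b$ of $A$, $$\operatorname{Kgrade}_{A\bowtie^f J}(\mathfrak b^e,A\bowtie^f J)=\min\{\operatorname{Kgrade}_A(\mathfrak b,A),\operatorname{Kgrade}_A(\mathfrak b,J)\};$$ (2) for every ideal $\mathfrak a$ of $A$, $$\operatorname{Kgrade}_{A\bowtie^f J}(\mathfrak a^e,A\bowtie^f J)\le\min\{\operatorname{Kgrade}_A(\mathfrak a,A),\operatorname{Kgrade}_A(\mathfrak a,J)\}.$$
   Context: The amalgamation of $A$ with $B$ along $J$ with respect to $f$ is the subring $A\bowtie^fJ=\{(a,f(a)+j): a\in A,\ j\in J\}$ of $A\times B$. Let $\iota_A:A\to A\bowtie^fJ$, $\iota_A(x)=(x,f(x))$; for an ideal $\mathfrak a$ of $A$, $\mathfrak a^e$ denotes the ideal $\iota_A(\mathfrak a)(A\bowtie^fJ)$. Koszul grade: for a ring $R$, an $R$-module $M$ and a finitely generated ideal $\mathfrak b$ of $R$ generated by $x_1,\dots,x_\ell$, $\operatorname{Kgrade}_R(\mathfrak b,M)=\inf\{i\ge 0: H^i(\operatorname{Hom}_R(\mathbb K_\bullet(x_1,\dots,x_\ell),M))\neq 0\}$ (with $\inf\emptyset=\infty$), where $\mathbb K_\bullet$ is the Koszul complex; this is independent of the generators. For an arbitrary ideal $\mathfrak a$ of $R$, $\operatorname{Kgrade}_R(\mathfrak a,M)=\sup\{\operatorname{Kgrade}_R(\mathfrak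 b,M):\mathfrak b\subseteq\mathfrak a$ finitely generated ideal$\}$. *)

theory Defs
  imports "HOL-Algebra.Algebra" "HOL-Library.Extended_Nat"
begin

definition amalg :: "('a, 'c) ring_scheme \<Rightarrow> ('b, 'd) ring_scheme \<Rightarrow> ('a \<Rightarrow> 'b) \<Rightarrow> 'b set
    \<Rightarrow> ('a \<times> 'b) ring" where
  "amalg A B f J =
     \<lparr> carrier = {(a, f a \<oplus>\<^bsub>B\<^esub> j) | a j. a \<in> carrier A \<and> j \<in> J},
       monoid.mult = (\<lambda>x y. (fst x \<otimes>\<^bsub>A\<^esub> fst y, snd x \<otimes>\<^bsub>B\<^esub> snd y)),
       one = (\<one>\<^bsub>A\<^esub>, \<one>\<^bsub>B\<^esub>),
       ring.zero = (\<zero>\<^bsub>A\<^esub>, \<zero>\<^bsub>B\<^esub>),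
       add = (\<lambda>x y. (fst x \<oplus>\<^bsub>A\<^esub> fst y, snd x \<oplus>\<^bsub>B\<^esub> snd y)) \<rparr>"

definition ext_ideal :: "('a, 'c) ring_scheme \<Rightarrow> ('b, 'd) ring_scheme \<Rightarrow> ('a \<Rightarrow> 'b) \<Rightarrow> 'b set
    \<Rightarrow> 'a set \<Rightarrow> ('a \<times> 'b) set" where
  "ext_ideal A B f J \<aa> = genideal (amalg A B f J) ((\<lambda>x. (x, f x)) ` \<aa>)"

definition ring_module :: "('a, 'c) ring_scheme \<Rightarrow> ('a, 'a) module" where
  "ring_module R = \<lparr> carrier = carrier R, monoid.mult = monoid.mult R, one = \<one>\<^bsub>R\<^esub>,
     ring.zero = \<zero>\<^bsub>R\<^esub>, add = add R, smult = monoid.mult R \<rparr>"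

definition ideal_module :: "('a, 'c) ring_scheme \<Rightarrow> ('b, 'd) ring_scheme \<Rightarrow> ('a \<Rightarrow> 'b)
    \<Rightarrow> 'b set \<Rightarrow> ('a, 'b) module" where
  "ideal_module A B f J = \<lparr> carrier = J, monoid.mult = monoid.mult B, one = \<one>\<^bsub>B\<^esub>,
     ring.zero = \<zero>\<^bsub>B\<^esub>, add = add B, smult = (\<lambda>a j. f a \<otimes>\<^bsub>B\<^esub> j) \<rparr>"

text \<open>Hom_R(K_i, M) is identified with the M-valued functions on the i-element subsets
  S of {0..<l} (values on the basis vectors e_S of the exterior power).  The dual of the
  Koszul differential d(e_T) = sum_{k in T} (-1)^{#{j in T. j < k}} x_k e_{T - {k}} gives
  (d phi)(T) = sum_{k in T} (-1)^{#{j in T. j < k}} x_k phi(T - {k}).\<close>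
definition koszul_d :: "('r, 'c) ring_scheme \<Rightarrow> ('r, 'm, 'e) module_scheme \<Rightarrow> 'r list
    \<Rightarrow> (nat set \<Rightarrow> 'm) \<Rightarrow> nat set \<Rightarrow> 'm" where
  "koszul_d R M xs \<phi> T =
     finsum M (\<lambda>k. if even (card {j \<in> T. j < k})
                   then (xs ! k) \<odot>\<^bsub>M\<^esub> \<phi> (T - {k})
                   else \<ominus>\<^bsub>M\<^esub> ((xs ! k) \<odot>\<^bsub>M\<^esub> \<phi> (T - {k}))) T"

definition koszul_cochain :: "('r, 'm, 'e) module_scheme \<Rightarrow> nat \<Rightarrow> nat \<Rightarrow> (nat set \<Rightarrow> 'm) \<Rightarrow> bool" where
  "koszul_cochain M l i \<phi> \<longleftrightarrow> (\<forall>S. S \<subseteq> {..<l} \<and> card S = i \<longrightarrow> \<phi> S \<in> carrier M)"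

definition koszul_cocycle :: "('r, 'c) ring_scheme \<Rightarrow> ('r, 'm, 'e) module_scheme \<Rightarrow> 'r list
    \<Rightarrow> nat \<Rightarrow> (nat set \<Rightarrow> 'm) \<Rightarrow> bool" where
  "koszul_cocycle R M xs i \<phi> \<longleftrightarrow> koszul_cochain M (length xs) i \<phi> \<and>
     (\<forall>T. T \<subseteq> {..<length xs} \<and> card T = Suc i \<longrightarrow> koszul_d R M xs \<phi> T = \<zero>\<^bsub>M\<^esub>)"

definition koszul_coboundary :: "('r, 'c) ring_scheme \<Rightarrow> ('r, 'm, 'e) module_scheme \<Rightarrow> 'r list
    \<Rightarrow> nat \<Rightarrow> (nat set \<Rightarrow> 'm) \<Rightarrow> bool" where
  "koszul_coboundary R M xs i \<phi> \<longleftrightarrow>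
     (if i = 0 then (\<forall>S. S \<subseteq> {..<length xs} \<and> card S = 0 \<longrightarrow> \<phi> S = \<zero>\<^bsub>M\<^esub>)
      else (\<exists>\<psi>. koszul_cochain M (length xs) (i - 1) \<psi> \<and>
              (\<forall>S. S \<subseteq> {..<length xs} \<and> card S = i \<longrightarrow> \<phi> S = koszul_d R M xs \<psi> S)))"

definition koszul_cohom_nonzero :: "('r, 'c) ring_scheme \<Rightarrow> ('r, 'm, 'e) module_scheme \<Rightarrow> 'r list
    \<Rightarrow> nat \<Rightarrow> bool" where
  "koszul_cohom_nonzero R M xs i \<longleftrightarrow>
     (\<exists>\<phi>. koszul_cocycle R M xs i \<phi> \<and> \<not> koszul_coboundary R M xs i \<phi>)"

definition koszul_grade_seq :: "('r, 'c) ring_scheme \<Rightarrow> 'r list \<Rightarrow> ('r, 'm, 'e) module_scheme \<Rightarrow> enat" where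
  "koszul_grade_seq R xs M = (INF i \<in> {i. koszul_cohom_nonzero R M xs i}. enat i)"

definition fin_gen_ideal :: "('r, 'c) ring_scheme \<Rightarrow> 'r set \<Rightarrow> bool" where
  "fin_gen_ideal R \<bb> \<longleftrightarrow> (\<exists>S. finite S \<and> S \<subseteq> carrier R \<and> \<bb> = genideal R S)"

text \<open>Koszul grade of a finitely generated ideal, computed on some finite generating list
  (it is independent of the choice of generators).\<close>
definition kgrade_fg :: "('r, 'c) ring_scheme \<Rightarrow> 'r set \<Rightarrow> ('r, 'm, 'e) module_scheme \<Rightarrow> enat" where
  "kgrade_fg R \<bb> M =
     koszul_grade_seq R (SOME xs. set xs \<subseteq> carrier R \<and> genideal R (set xs) = \<bb>) M"

definition kgrade :: "('r, 'c) ring_scheme \<Rightarrow> 'r set \<Rightarrow> ('r, 'm, 'e) module_scheme \<Rightarrow> enat" where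
  "kgrade R \<aa> M = (SUP \<bb> \<in> {\<bb>. \<bb> \<subseteq> \<aa> \<and> fin_gen_ideal R \<bb>}. kgrade_fg R \<bb> M)"

end

theory Submission
  imports Defs
begin

(* As an A-module, amalg A B f J is A (+) J via u |-> (fst u, snd u - f (fst u)), and this splitting
   is compatible with the Koszul differentials of x over A and of iota x = (x, f x) over the
   amalgamation.  Hence H^i(iota x; amalg A B f J) = H^i(x; A) (+) H^i(x; J), so the first
   nonvanishing degree is the minimum of the two.  The Koszul grade of a sequence depends only, and
   monotonically, on the ideal it generates: adjoining an element y of that ideal does not change
   it, because K(x, y) is the mapping cone of multiplication by y on K(x) and y annihilates H(x).
   Part (2) follows since every finitely generated subideal of an extended ideal a^e lies in b^e
   for some finitely generated b <= a. *)

lemma INF_enat_mono: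
  assumes "\<And>g. \<forall>j<g. \<not> P j \<Longrightarrow> \<forall>j<g. \<not> Q j"
  shows "(INF i\<in>{i. P i}. enat i) \<le> (INF i\<in>{i. Q i}. enat i)"
proof (rule INF_greatest)
  fix i assume Qi: "i \<in> {i. Q i}"
  show "(INF i\<in>{i. P i}. enat i) \<le> enat i"
  proof (rule ccontr)
    assume "\<not> (INF i\<in>{i. P i}. enat i) \<le> enat i"
    then have "\<forall>j<Suc i. \<not> P j"
      by (metis (mono_tags) INF_lower enat_ord_simps(2) le_less_trans less_Suc_eq_le mem_Collect_eq not_le)
    then show False using assms Qi by blast
  qed
qed

lemma INF_enat_cong:
  assumes "\<And>g. (\<forall>j<g. \<not> P j) \<longleftrightarrow> (\<forall>j<g. \<not> Q j)"
  shows "(INF i\<in>{i. P i}. enat i) = (INF i\<in>{i. Q i}. enat i)"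
  using assms by (intro antisym INF_enat_mono) blast+

lemma (in abelian_group) a_inv_zero [simp]: "\<ominus> \<zero> = \<zero>"
  by (rule minus_equality) auto

lemma (in abelian_group) a_minus_eq_zero_iff:
  "x \<in> carrier G \<Longrightarrow> y \<in> carrier G \<Longrightarrow> x \<ominus> y = \<zero> \<longleftrightarrow> x = y"
  by (metis a_minus_def add.inv_solve_right l_zero r_neg zero_closed a_inv_closed)

lemma (in abelian_group) a_minus_minus_cancel:
  "x \<in> carrier G \<Longrightarrow> y \<in> carrier G \<Longrightarrow> x \<ominus> (x \<ominus> y) = y"
  by (simp add: a_minus_def minus_add minus_minus a_assoc[symmetric] r_neg)

lemma abelian_group_homI':
  assumes "abelian_group G" "abelian_group H" "\<And>u. u \<in> carrier G \<Longrightarrow> h u \<in> carrier H"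
    "\<And>u v. u \<in> carrier G \<Longrightarrow> v \<in> carrier G \<Longrightarrow> h (u \<oplus>\<^bsub>G\<^esub> v) = h u \<oplus>\<^bsub>H\<^esub> h v"
  shows "abelian_group_hom G H h"
  using assms abelian_group.a_group[OF assms(1)] abelian_group.a_group[OF assms(2)]
  by (intro abelian_group_homI group_hom.intro group_hom_axioms.intro homI) auto

lemma abelian_group_hom_finsum:
  assumes "abelian_group_hom G H h" "finite A" "g \<in> A \<rightarrow> carrier G"
  shows "h (finsum G g A) = finsum H (h \<circ> g) A"
proof -
  interpret abelian_group_hom G H h by fact
  show ?thesis using assms(2,3)
    by (induction A rule: finite_induct) (auto simp: Pi_def)
qed

lemma ring_module_simps [simp]:
  "carrier (ring_module R) = carrier R"
  "a \<oplus>\<^bsub>ring_module R\<^esub> b = a \<oplus>\<^bsub>R\<^esub> b"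
  "\<zero>\<^bsub>ring_module R\<^esub> = \<zero>\<^bsub>R\<^esub>"
  "a \<odot>\<^bsub>ring_module R\<^esub> b = a \<otimes>\<^bsub>R\<^esub> b"
  by (simp_all add: ring_module_def)

lemma module_ring_module:
  assumes "cring R"
  shows "module R (ring_module R)"
proof -
  interpret cring R by fact
  show ?thesis
  proof (rule moduleI)
    show "abelian_group (ring_module R)"
      by (rule abelian_groupI) (auto simp: a_ac intro: l_neg)
  qed (auto simp: assms l_distr r_distr m_assoc)
qed

lemma (in ring) ideal_Union_genideal_finite:
  assumes S: "S \<subseteq> carrier R"
  shows "ideal (\<Union>S\<^sub>0 \<in> {S\<^sub>0. S\<^sub>0 \<subseteq> S \<and> finite S\<^sub>0}. genideal R S\<^sub>0) R" (is "ideal ?U R")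
proof -
  have gen: "ideal (genideal R S\<^sub>0) R" if "S\<^sub>0 \<subseteq> S" for S\<^sub>0 using that S by (intro genideal_ideal) auto
  have add: "a \<oplus> b \<in> ?U" if "a \<in> ?U" "b \<in> ?U" for a b
  proof -
    from that(1) obtain S\<^sub>0 where S\<^sub>0: "S\<^sub>0 \<subseteq> S" "finite S\<^sub>0" "a \<in> genideal R S\<^sub>0" by auto
    from that(2) obtain S\<^sub>1 where S\<^sub>1: "S\<^sub>1 \<subseteq> S" "finite S\<^sub>1" "b \<in> genideal R S\<^sub>1" by auto
    have "genideal R S\<^sub>0 \<subseteq> genideal R (S\<^sub>0 \<union> S\<^sub>1)" "genideal R S\<^sub>1 \<subseteq> genideal R (S\<^sub>0 \<union> S\<^sub>1)"
      using S\<^sub>0(1) S\<^sub>1(1) S by (metis Un_upper1 Un_upper2 le_supI order_trans subset_Idl_subset)+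
    then have "a \<oplus> b \<in> genideal R (S\<^sub>0 \<union> S\<^sub>1)"
      using S\<^sub>0(3) S\<^sub>1(3) additive_subgroup.a_closed[OF ideal.axioms(1)[OF gen[of "S\<^sub>0 \<union> S\<^sub>1"]]] S\<^sub>0(1) S\<^sub>1(1)
      by auto
    then show ?thesis using S\<^sub>0(1,2) S\<^sub>1(1,2) by (intro UN_I[of "S\<^sub>0 \<union> S\<^sub>1"]) auto
  qed
  have closed: "\<ominus> a \<in> ?U \<and> r \<otimes> a \<in> ?U \<and> a \<otimes> r \<in> ?U" if "a \<in> ?U" "r \<in> carrier R" for a r
  proof -
    from that(1) obtain S\<^sub>0 where S\<^sub>0: "S\<^sub>0 \<subseteq> S" "finite S\<^sub>0" "a \<in> genideal R S\<^sub>0" by auto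
    then have "\<ominus> a \<in> genideal R S\<^sub>0 \<and> r \<otimes> a \<in> genideal R S\<^sub>0 \<and> a \<otimes> r \<in> genideal R S\<^sub>0"
      using gen[OF S\<^sub>0(1)] that(2)
      by (simp add: additive_subgroup.a_inv_closed ideal.axioms(1) ideal.I_l_closed ideal.I_r_closed)
    then show ?thesis using S\<^sub>0(1,2) by (auto intro!: UN_I[of S\<^sub>0])
  qed
  have zero: "\<zero> \<in> ?U"
    using additive_subgroup.zero_closed[OF ideal.axioms(1)[OF gen[of "{}"]]] by (auto intro!: UN_I[of "{}"])
  show ?thesis
  proof (rule idealI)
    show "subgroup ?U (add_monoid R)"
    proof
      show "?U \<subseteq> carrier (add_monoid R)" using gen by (auto dest: ideal.Icarr)
      show "\<one>\<^bsub>add_monoid R\<^esub> \<in> ?U" using zero by simp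
      show "a \<otimes>\<^bsub>add_monoid R\<^esub> b \<in> ?U" if "a \<in> ?U" "b \<in> ?U" for a b using add[OF that] by simp
      show "inv\<^bsub>add_monoid R\<^esub> a \<in> ?U" if "a \<in> ?U" for a
        using closed[OF that one_closed] by (simp add: a_inv_def[symmetric])
    qed
    show "r \<otimes> a \<in> ?U" "a \<otimes> r \<in> ?U" if "a \<in> ?U" "r \<in> carrier R" for a r using closed[OF that] by auto
  qed (rule ring_axioms)
qed

lemma (in ring) genideal_finite_subset:
  assumes S: "S \<subseteq> carrier R" and T: "finite T" "T \<subseteq> genideal R S"
  obtains S\<^sub>0 where "S\<^sub>0 \<subseteq> S" "finite S\<^sub>0" "T \<subseteq> genideal R S\<^sub>0"
proof -
  have "S \<subseteq> (\<Union>S\<^sub>0 \<in> {S\<^sub>0. S\<^sub>0 \<subseteq> S \<and> finite S\<^sub>0}. genideal R S\<^sub>0)"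
  proof
    fix s assume "s \<in> S"
    then show "s \<in> (\<Union>S\<^sub>0 \<in> {S\<^sub>0. S\<^sub>0 \<subseteq> S \<and> finite S\<^sub>0}. genideal R S\<^sub>0)"
      using S genideal_self'[of s] by (intro UN_I[of "{s}"]) auto
  qed
  then have "genideal R S \<subseteq> (\<Union>S\<^sub>0 \<in> {S\<^sub>0. S\<^sub>0 \<subseteq> S \<and> finite S\<^sub>0}. genideal R S\<^sub>0)"
    by (rule genideal_minimal[OF ideal_Union_genideal_finite[OF S]])
  then have "\<forall>t\<in>T. \<exists>S\<^sub>0. S\<^sub>0 \<subseteq> S \<and> finite S\<^sub>0 \<and> t \<in> genideal R S\<^sub>0" using T(2) by blast
  then obtain g where g: "\<forall>t\<in>T. g t \<subseteq> S \<and> finite (g t) \<and> t \<in> genideal R (g t)" by (metis bchoice)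
  show ?thesis
  proof
    show "\<Union> (g ` T) \<subseteq> S" "finite (\<Union> (g ` T))" using g T(1) by auto
    have "genideal R (g t) \<subseteq> genideal R (\<Union> (g ` T))" if "t \<in> T" for t
      using g that S by (intro subset_Idl_subset) auto
    then show "T \<subseteq> genideal R (\<Union> (g ` T))" using g by blast
  qed
qed

section \<open>Koszul cochains of a finitely indexed family\<close>

text \<open>The family \<open>x\<close> is indexed by a finite set \<open>I\<close> of naturals rather than by a list as in
  \<open>koszul_grade_seq\<close>, so that adjoining a generator or relabelling the generators only changes \<open>I\<close>.
  In degree \<open>0\<close> the truncated \<open>i - 1\<close> leaves \<open>\<phi> {} = \<zero>\<close> as the only coboundary condition.\<close>

definition signed :: "('r,'m,'e) module_scheme \<Rightarrow> nat \<Rightarrow> 'm \<Rightarrow> 'm" where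
  "signed M n v = (if even n then v else \<ominus>\<^bsub>M\<^esub> v)"

definition kdiff :: "('r,'c) ring_scheme \<Rightarrow> ('r,'m,'e) module_scheme \<Rightarrow> (nat \<Rightarrow> 'r)
    \<Rightarrow> (nat set \<Rightarrow> 'm) \<Rightarrow> nat set \<Rightarrow> 'm" where
  "kdiff R M x \<phi> T = finsum M (\<lambda>k. signed M (card {j\<in>T. j<k}) (x k \<odot>\<^bsub>M\<^esub> \<phi> (T - {k}))) T"

definition kcochain :: "('r,'m,'e) module_scheme \<Rightarrow> nat set \<Rightarrow> nat \<Rightarrow> (nat set \<Rightarrow> 'm) \<Rightarrow> bool" where
  "kcochain M I i \<phi> \<longleftrightarrow> (\<forall>S. S \<subseteq> I \<and> card S = i \<longrightarrow> \<phi> S \<in> carrier M)"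

definition kcocycle :: "('r,'c) ring_scheme \<Rightarrow> ('r,'m,'e) module_scheme \<Rightarrow> nat set \<Rightarrow> (nat \<Rightarrow> 'r)
    \<Rightarrow> nat \<Rightarrow> (nat set \<Rightarrow> 'm) \<Rightarrow> bool" where
  "kcocycle R M I x i \<phi> \<longleftrightarrow>
     kcochain M I i \<phi> \<and> (\<forall>T. T \<subseteq> I \<and> card T = Suc i \<longrightarrow> kdiff R M x \<phi> T = \<zero>\<^bsub>M\<^esub>)"

definition kcoboundary :: "('r,'c) ring_scheme \<Rightarrow> ('r,'m,'e) module_scheme \<Rightarrow> nat set \<Rightarrow> (nat \<Rightarrow> 'r)
    \<Rightarrow> nat \<Rightarrow> (nat set \<Rightarrow> 'm) \<Rightarrow> bool" where
  "kcoboundary R M I x i \<phi> \<longleftrightarrow>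
     (\<exists>\<psi>. kcochain M I (i - 1) \<psi> \<and> (\<forall>S. S \<subseteq> I \<and> card S = i \<longrightarrow> \<phi> S = kdiff R M x \<psi> S))"

definition kcohom_nonzero :: "('r,'c) ring_scheme \<Rightarrow> ('r,'m,'e) module_scheme \<Rightarrow> nat set
    \<Rightarrow> (nat \<Rightarrow> 'r) \<Rightarrow> nat \<Rightarrow> bool" where
  "kcohom_nonzero R M I x i \<longleftrightarrow> (\<exists>\<phi>. kcocycle R M I x i \<phi> \<and> \<not> kcoboundary R M I x i \<phi>)"

definition kgrade_on :: "('r,'c) ring_scheme \<Rightarrow> ('r,'m,'e) module_scheme \<Rightarrow> nat set
    \<Rightarrow> (nat \<Rightarrow> 'r) \<Rightarrow> enat" where
  "kgrade_on R M I x = (INF i \<in> {i. kcohom_nonzero R M I x i}. enat i)"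

context module
begin

lemma signed_closed [simp]: "v \<in> carrier M \<Longrightarrow> signed M n v \<in> carrier M"
  by (simp add: signed_def)

lemma signed_0 [simp]: "signed M 0 v = v"
  by (simp add: signed_def)

lemma signed_zero [simp]: "signed M n \<zero>\<^bsub>M\<^esub> = \<zero>\<^bsub>M\<^esub>"
  by (simp add: signed_def)

lemma signed_parity_cong: "even n \<longleftrightarrow> even k \<Longrightarrow> signed M n v = signed M k v"
  by (simp add: signed_def)

lemma signed_Suc: "v \<in> carrier M \<Longrightarrow> signed M (Suc n) v = \<ominus>\<^bsub>M\<^esub> signed M n v"
  by (simp add: signed_def M.minus_minus)

lemma signed_signed: "v \<in> carrier M \<Longrightarrow> signed M n (signed M k v) = signed M (n + k) v"
  by (auto simp add: signed_def M.minus_minus)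

lemma signed_signed_same [simp]: "v \<in> carrier M \<Longrightarrow> signed M n (signed M n v) = v"
  by (simp add: signed_def M.minus_minus)

lemma signed_add:
  "v \<in> carrier M \<Longrightarrow> w \<in> carrier M \<Longrightarrow> signed M n (v \<oplus>\<^bsub>M\<^esub> w) = signed M n v \<oplus>\<^bsub>M\<^esub> signed M n w"
  by (simp add: signed_def M.minus_add)

lemma signed_uminus: "v \<in> carrier M \<Longrightarrow> signed M n (\<ominus>\<^bsub>M\<^esub> v) = \<ominus>\<^bsub>M\<^esub> signed M n v"
  by (simp add: signed_def)

lemma signed_smult: "a \<in> carrier R \<Longrightarrow> v \<in> carrier M \<Longrightarrow> signed M n (a \<odot>\<^bsub>M\<^esub> v) = a \<odot>\<^bsub>M\<^esub> signed M n v"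
  by (simp add: signed_def smult_r_minus)

lemma signed_eq_zero_iff: "v \<in> carrier M \<Longrightarrow> signed M n v = \<zero>\<^bsub>M\<^esub> \<longleftrightarrow> v = \<zero>\<^bsub>M\<^esub>"
  by (metis signed_def M.minus_minus M.a_inv_zero)

lemma finsum_uminus:
  "finite A \<Longrightarrow> f \<in> A \<rightarrow> carrier M \<Longrightarrow> (\<Oplus>\<^bsub>M\<^esub>k\<in>A. \<ominus>\<^bsub>M\<^esub> f k) = \<ominus>\<^bsub>M\<^esub> finsum M f A"
proof (induct A rule: finite_induct)
  case (insert a A)
  then show ?case by (simp add: M.minus_add M.finsum_closed Pi_def M.a_comm)
qed simp

lemma finsum_signed:
  "finite A \<Longrightarrow> f \<in> A \<rightarrow> carrier M \<Longrightarrow> (\<Oplus>\<^bsub>M\<^esub>k\<in>A. signed M n (f k)) = signed M n (finsum M f A)"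
  by (simp add: signed_def finsum_uminus)

lemma kdiff_closed:
  "(\<And>k. k \<in> T \<Longrightarrow> x k \<in> carrier R) \<Longrightarrow> (\<And>k. k \<in> T \<Longrightarrow> \<phi> (T - {k}) \<in> carrier M)
   \<Longrightarrow> kdiff R M x \<phi> T \<in> carrier M"
  unfolding kdiff_def by (intro M.finsum_closed) auto

lemma kdiff_empty [simp]: "kdiff R M x \<phi> {} = \<zero>\<^bsub>M\<^esub>"
  by (simp add: kdiff_def)

lemma kdiff_cong:
  assumes "\<And>k. k \<in> T \<Longrightarrow> x k = x' k" "\<And>k. k \<in> T \<Longrightarrow> \<phi> (T - {k}) = \<phi>' (T - {k})"
    "\<And>k. k \<in> T \<Longrightarrow> x k \<in> carrier R" "\<And>k. k \<in> T \<Longrightarrow> \<phi> (T - {k}) \<in> carrier M"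
  shows "kdiff R M x \<phi> T = kdiff R M x' \<phi>' T"
  unfolding kdiff_def using assms by (intro M.finsum_cong') auto

lemma kdiff_add:
  assumes "finite T" "\<And>k. k \<in> T \<Longrightarrow> x k \<in> carrier R"
    "\<And>k. k \<in> T \<Longrightarrow> \<phi> (T - {k}) \<in> carrier M" "\<And>k. k \<in> T \<Longrightarrow> \<psi> (T - {k}) \<in> carrier M"
  shows "kdiff R M x (\<lambda>S. \<phi> S \<oplus>\<^bsub>M\<^esub> \<psi> S) T = kdiff R M x \<phi> T \<oplus>\<^bsub>M\<^esub> kdiff R M x \<psi> T"
proof -
  have "kdiff R M x (\<lambda>S. \<phi> S \<oplus>\<^bsub>M\<^esub> \<psi> S) T =
    (\<Oplus>\<^bsub>M\<^esub>k\<in>T. signed M (card {j\<in>T. j<k}) (x k \<odot>\<^bsub>M\<^esub> \<phi> (T - {k}))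
       \<oplus>\<^bsub>M\<^esub> signed M (card {j\<in>T. j<k}) (x k \<odot>\<^bsub>M\<^esub> \<psi> (T - {k})))"
    unfolding kdiff_def using assms by (intro M.finsum_cong') (auto simp: smult_r_distr signed_add)
  also have "\<dots> = kdiff R M x \<phi> T \<oplus>\<^bsub>M\<^esub> kdiff R M x \<psi> T"
    unfolding kdiff_def using assms by (intro M.finsum_addf) auto
  finally show ?thesis .
qed

lemma kdiff_uminus:
  assumes "finite T" "\<And>k. k \<in> T \<Longrightarrow> x k \<in> carrier R" "\<And>k. k \<in> T \<Longrightarrow> \<phi> (T - {k}) \<in> carrier M"
  shows "kdiff R M x (\<lambda>S. \<ominus>\<^bsub>M\<^esub> \<phi> S) T = \<ominus>\<^bsub>M\<^esub> kdiff R M x \<phi> T"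
proof -
  have "kdiff R M x (\<lambda>S. \<ominus>\<^bsub>M\<^esub> \<phi> S) T =
    (\<Oplus>\<^bsub>M\<^esub>k\<in>T. \<ominus>\<^bsub>M\<^esub> signed M (card {j\<in>T. j<k}) (x k \<odot>\<^bsub>M\<^esub> \<phi> (T - {k})))"
    unfolding kdiff_def using assms by (intro M.finsum_cong') (auto simp: smult_r_minus signed_uminus)
  also have "\<dots> = \<ominus>\<^bsub>M\<^esub> kdiff R M x \<phi> T"
    unfolding kdiff_def using assms by (intro finsum_uminus) auto
  finally show ?thesis .
qed

lemma kdiff_smult:
  assumes "finite T" "a \<in> carrier R" "\<And>k. k \<in> T \<Longrightarrow> x k \<in> carrier R"
    "\<And>k. k \<in> T \<Longrightarrow> \<phi> (T - {k}) \<in> carrier M"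
  shows "kdiff R M x (\<lambda>S. a \<odot>\<^bsub>M\<^esub> \<phi> S) T = a \<odot>\<^bsub>M\<^esub> kdiff R M x \<phi> T"
proof -
  have "kdiff R M x (\<lambda>S. a \<odot>\<^bsub>M\<^esub> \<phi> S) T =
    (\<Oplus>\<^bsub>M\<^esub>k\<in>T. a \<odot>\<^bsub>M\<^esub> signed M (card {j\<in>T. j<k}) (x k \<odot>\<^bsub>M\<^esub> \<phi> (T - {k})))"
    unfolding kdiff_def using assms
    by (intro M.finsum_cong') (auto simp: signed_smult smult_assoc1[symmetric] m_comm)
  also have "\<dots> = a \<odot>\<^bsub>M\<^esub> kdiff R M x \<phi> T"
    unfolding kdiff_def using assms by (intro finsum_smult_ldistr[symmetric]) auto
  finally show ?thesis .
qed

lemma kdiff_zero: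
  assumes "\<And>k. k \<in> T \<Longrightarrow> x k \<in> carrier R"
  shows "kdiff R M x (\<lambda>S. \<zero>\<^bsub>M\<^esub>) T = \<zero>\<^bsub>M\<^esub>"
  unfolding kdiff_def using assms by (subst M.finsum_cong'[of _ _ "\<lambda>_. \<zero>\<^bsub>M\<^esub>"]) auto

lemma kcochain_mono: "kcochain M I' i \<phi> \<Longrightarrow> I \<subseteq> I' \<Longrightarrow> kcochain M I i \<phi>"
  by (auto simp: kcochain_def)

lemma kcochain_face:
  assumes "finite I" "kcochain M I j \<psi>" "S \<subseteq> I" "card S = Suc j" "k \<in> S"
  shows "\<psi> (S - {k}) \<in> carrier M"
proof -
  have "card (S - {k}) = j" "S - {k} \<subseteq> I" using assms finite_subset[OF assms(3,1)] by auto
  then show ?thesis using assms(2) unfolding kcochain_def by blast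
qed

lemma kcochain_face_pred:
  assumes "finite I" "kcochain M I (i - 1) \<psi>" "S \<subseteq> I" "card S = i" "k \<in> S"
  shows "\<psi> (S - {k}) \<in> carrier M"
proof -
  have "i = Suc (i - 1)" using assms finite_subset[OF assms(3,1)] by (cases i) auto
  then show ?thesis using kcochain_face[OF assms(1-3)] assms(4,5) by simp
qed

lemma kcoboundary_cong:
  assumes "kcoboundary R M I x i \<alpha>" "\<And>S. S \<subseteq> I \<Longrightarrow> card S = i \<Longrightarrow> \<alpha> S = \<beta> S"
  shows "kcoboundary R M I x i \<beta>"
  using assms unfolding kcoboundary_def by metis

lemma kcocycle_cong:
  assumes fin: "finite I" and xc: "x ` I \<subseteq> carrier R"
    and eq: "\<And>S. S \<subseteq> I \<Longrightarrow> card S = i \<Longrightarrow> \<phi> S = \<phi>' S"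
  shows "kcocycle R M I x i \<phi> \<longleftrightarrow> kcocycle R M I x i \<phi>'"
proof -
  have "kcochain M I i \<phi> \<longleftrightarrow> kcochain M I i \<phi>'" using eq by (auto simp: kcochain_def)
  moreover have "kdiff R M x \<phi> T = kdiff R M x \<phi>' T"
    if \<phi>: "kcochain M I i \<phi>" and T: "T \<subseteq> I" "card T = Suc i" for T
  proof -
    have "\<phi> (T - {k}) = \<phi>' (T - {k})" if "k \<in> T" for k
      using eq[of "T - {k}"] that T finite_subset[OF T(1) fin] by auto
    then show ?thesis using T xc kcochain_face[OF fin \<phi> T] by (intro kdiff_cong) auto
  qed
  ultimately show ?thesis by (auto simp: kcocycle_def)
qed

lemma kcocycle_zero:
  assumes "x ` I \<subseteq> carrier R"
  shows "kcocycle R M I x i (\<lambda>S. \<zero>\<^bsub>M\<^esub>)"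
  using assms by (auto simp: kcocycle_def kcochain_def intro!: kdiff_zero)

lemma kcoboundary_0_iff:
  assumes "finite I"
  shows "kcoboundary R M I x 0 \<phi> \<longleftrightarrow> \<phi> {} = \<zero>\<^bsub>M\<^esub>"
proof -
  have "S \<subseteq> I \<and> card S = 0 \<longleftrightarrow> S = {}" for S
    using assms by (metis card.empty card_0_eq empty_subsetI finite_subset)
  then show ?thesis
    by (auto simp: kcoboundary_def kcochain_def intro!: exI[of _ "\<lambda>S. \<zero>\<^bsub>M\<^esub>"])
qed

lemma kcoboundary_zero:
  assumes "x ` I \<subseteq> carrier R"
  shows "kcoboundary R M I x i (\<lambda>S. \<zero>\<^bsub>M\<^esub>)"
proof -
  have "kdiff R M x (\<lambda>S. \<zero>\<^bsub>M\<^esub>) S = \<zero>\<^bsub>M\<^esub>" if "S \<subseteq> I" for S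
    using assms that by (intro kdiff_zero) auto
  then show ?thesis unfolding kcoboundary_def kcochain_def by (intro exI[of _ "\<lambda>S. \<zero>\<^bsub>M\<^esub>"]) auto
qed

lemma kcoboundary_add:
  assumes fin: "finite I" and xc: "x ` I \<subseteq> carrier R"
    and "kcoboundary R M I x i \<alpha>" "kcoboundary R M I x i \<beta>"
  shows "kcoboundary R M I x i (\<lambda>S. \<alpha> S \<oplus>\<^bsub>M\<^esub> \<beta> S)"
proof -
  obtain \<psi>\<^sub>1 \<psi>\<^sub>2 where \<psi>: "kcochain M I (i - 1) \<psi>\<^sub>1" "kcochain M I (i - 1) \<psi>\<^sub>2"
    and eq: "\<And>S. S \<subseteq> I \<Longrightarrow> card S = i \<Longrightarrow> \<alpha> S = kdiff R M x \<psi>\<^sub>1 S \<and> \<beta> S = kdiff R M x \<psi>\<^sub>2 S"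
    using assms(3,4) unfolding kcoboundary_def by metis
  have "\<alpha> S \<oplus>\<^bsub>M\<^esub> \<beta> S = kdiff R M x (\<lambda>S. \<psi>\<^sub>1 S \<oplus>\<^bsub>M\<^esub> \<psi>\<^sub>2 S) S" if S: "S \<subseteq> I" "card S = i" for S
  proof -
    have "\<And>k. k \<in> S \<Longrightarrow> x k \<in> carrier R" using xc S by auto
    then show ?thesis
      using eq[OF S] kcochain_face_pred[OF fin \<psi>(1) S] kcochain_face_pred[OF fin \<psi>(2) S]
        finite_subset[OF S(1) fin] kdiff_add[of S x \<psi>\<^sub>1 \<psi>\<^sub>2] by simp
  qed
  moreover have "kcochain M I (i - 1) (\<lambda>S. \<psi>\<^sub>1 S \<oplus>\<^bsub>M\<^esub> \<psi>\<^sub>2 S)" using \<psi> by (auto simp: kcochain_def)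
  ultimately show ?thesis unfolding kcoboundary_def by blast
qed

lemma kcoboundary_smult:
  assumes fin: "finite I" and xc: "x ` I \<subseteq> carrier R" and a: "a \<in> carrier R"
    and "kcoboundary R M I x i \<alpha>"
  shows "kcoboundary R M I x i (\<lambda>S. a \<odot>\<^bsub>M\<^esub> \<alpha> S)"
proof -
  obtain \<psi> where \<psi>: "kcochain M I (i - 1) \<psi>"
    and eq: "\<And>S. S \<subseteq> I \<Longrightarrow> card S = i \<Longrightarrow> \<alpha> S = kdiff R M x \<psi> S"
    using assms(4) unfolding kcoboundary_def by metis
  have "a \<odot>\<^bsub>M\<^esub> \<alpha> S = kdiff R M x (\<lambda>S. a \<odot>\<^bsub>M\<^esub> \<psi> S) S" if S: "S \<subseteq> I" "card S = i" for S
  proof -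
    have "\<And>k. k \<in> S \<Longrightarrow> x k \<in> carrier R" using xc S by auto
    then show ?thesis
      using eq[OF S] a kcochain_face_pred[OF fin \<psi> S] finite_subset[OF S(1) fin] kdiff_smult[of S a x \<psi>]
      by simp
  qed
  moreover have "kcochain M I (i - 1) (\<lambda>S. a \<odot>\<^bsub>M\<^esub> \<psi> S)" using \<psi> a by (auto simp: kcochain_def)
  ultimately show ?thesis unfolding kcoboundary_def by blast
qed

end

lemma kdiff_hom:
  fixes G :: "('r, 'a, 'c) module_scheme" and H :: "('s, 'b, 'd) module_scheme"
  assumes hom: "abelian_group_hom G H h" and fin: "finite T"
    and smult: "\<And>k v. k \<in> T \<Longrightarrow> v \<in> carrier G \<Longrightarrow>
      x k \<odot>\<^bsub>G\<^esub> v \<in> carrier G \<and> h (x k \<odot>\<^bsub>G\<^esub> v) = x' k \<odot>\<^bsub>H\<^esub> h v"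
    and faces: "\<And>k. k \<in> T \<Longrightarrow> \<phi> (T - {k}) \<in> carrier G"
  shows "h (kdiff R G x \<phi> T) = kdiff R' H x' (\<lambda>S. h (\<phi> S)) T"
proof -
  interpret abelian_group_hom G H h by fact
  have summand: "h (signed G n (x k \<odot>\<^bsub>G\<^esub> \<phi> (T - {k}))) = signed H n (x' k \<odot>\<^bsub>H\<^esub> h (\<phi> (T - {k})))"
    "signed G n (x k \<odot>\<^bsub>G\<^esub> \<phi> (T - {k})) \<in> carrier G" if "k \<in> T" for k n
    using smult[OF that faces[OF that]] by (auto simp: signed_def)
  have "h (kdiff R G x \<phi> T) = (\<Oplus>\<^bsub>H\<^esub>k\<in>T. h (signed G (card {j\<in>T. j<k}) (x k \<odot>\<^bsub>G\<^esub> \<phi> (T - {k}))))"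
    unfolding kdiff_def using summand(2) by (subst abelian_group_hom_finsum[OF hom fin]) (auto simp: comp_def)
  also have "\<dots> = kdiff R' H x' (\<lambda>S. h (\<phi> S)) T"
    unfolding kdiff_def using summand by (intro H.finsum_cong') (auto simp flip: summand(1))
  finally show ?thesis .
qed

section \<open>Adjoining a generator\<close>

lemma card_less_insert:
  assumes "finite T" "m \<notin> T"
  shows "card {j \<in> insert m T. j < k} = card {j\<in>T. j<k} + (if m < k then 1 else 0)"
proof -
  have "{j \<in> insert m T. j < k} = (if m < k then insert m {j\<in>T. j<k} else {j\<in>T. j<k})" by auto
  then show ?thesis using assms by simp
qed

lemma card_less_remove:
  assumes "finite T" "k \<in> T"
  shows "card {j\<in>T. j<m} = card {j\<in>T-{k}. j<m} + (if k < m then 1 else 0)"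
  using card_less_insert[of "T - {k}" k m] assms by (simp add: insert_absorb)

text \<open>A cochain on \<open>insert m I\<close> is determined by its values on the faces avoiding \<open>m\<close> and, through
  \<open>cochain_contract\<close>, its signed values on the faces containing \<open>m\<close>; \<open>cochain_glue\<close> reassembles it.\<close>

definition cochain_contract :: "('r,'m,'e) module_scheme \<Rightarrow> nat \<Rightarrow> (nat set \<Rightarrow> 'm) \<Rightarrow> nat set \<Rightarrow> 'm" where
  "cochain_contract M m \<phi> S = signed M (card {j\<in>S. j<m}) (\<phi> (insert m S))"

definition cochain_glue :: "('r,'m,'e) module_scheme \<Rightarrow> nat \<Rightarrow> (nat set \<Rightarrow> 'm) \<Rightarrow> (nat set \<Rightarrow> 'm)
    \<Rightarrow> nat set \<Rightarrow> 'm" where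
  "cochain_glue M m \<phi>\<^sub>1 \<phi>\<^sub>2 S =
     (if m \<in> S then signed M (card {j\<in>S-{m}. j<m}) (\<phi>\<^sub>2 (S - {m})) else \<phi>\<^sub>1 S)"

context module
begin

lemma cochain_glue_notin [simp]: "m \<notin> S \<Longrightarrow> cochain_glue M m \<phi>\<^sub>1 \<phi>\<^sub>2 S = \<phi>\<^sub>1 S"
  by (simp add: cochain_glue_def)

lemma cochain_contract_glue:
  "m \<notin> S \<Longrightarrow> \<phi>\<^sub>2 S \<in> carrier M \<Longrightarrow> cochain_contract M m (cochain_glue M m \<phi>\<^sub>1 \<phi>\<^sub>2) S = \<phi>\<^sub>2 S"
  by (simp add: cochain_contract_def cochain_glue_def insert_Diff_if)

lemma kcochain_contract:
  assumes "finite I" "m \<notin> I" "kcochain M (insert m I) (Suc i) \<phi>"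
  shows "kcochain M I i (cochain_contract M m \<phi>)"
  unfolding kcochain_def
proof (intro allI impI)
  fix S assume S: "S \<subseteq> I \<and> card S = i"
  moreover have "finite S" "m \<notin> S" using S assms(1,2) finite_subset by auto
  ultimately have "card (insert m S) = Suc i" "insert m S \<subseteq> insert m I" by auto
  then show "cochain_contract M m \<phi> S \<in> carrier M"
    using assms(3) by (simp add: kcochain_def cochain_contract_def)
qed

lemma kcochain_glue:
  assumes "finite I" "m \<notin> I" "kcochain M I i \<phi>\<^sub>1" "kcochain M I (i - 1) \<phi>\<^sub>2"
  shows "kcochain M (insert m I) i (cochain_glue M m \<phi>\<^sub>1 \<phi>\<^sub>2)"
  unfolding kcochain_def
proof (intro allI impI)
  fix S assume S: "S \<subseteq> insert m I \<and> card S = i"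
  then have "finite S" using assms(1) finite_subset by auto
  then have "S - {m} \<subseteq> I \<and> card (S - {m}) = i - 1" if "m \<in> S" using S that by auto
  then show "cochain_glue M m \<phi>\<^sub>1 \<phi>\<^sub>2 S \<in> carrier M"
    using S assms(3,4) by (cases "m \<in> S") (auto simp: kcochain_def cochain_glue_def)
qed

lemma kdiff_upd_notin:
  assumes "m \<notin> T" "\<And>k. k \<in> T \<Longrightarrow> x k \<in> carrier R" "\<And>k. k \<in> T \<Longrightarrow> \<phi> (T - {k}) \<in> carrier M"
  shows "kdiff R M (x(m:=y)) \<phi> T = kdiff R M x \<phi> T"
  using assms by (intro kdiff_cong) auto

text \<open>The Koszul complex of \<open>x, y\<close> is the mapping cone of multiplication by \<open>y\<close> on that of \<open>x\<close>:\<close>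

lemma kdiff_insert_upd:
  assumes fin: "finite T" and mT: "m \<notin> T" and xc: "\<And>k. k \<in> T \<Longrightarrow> x k \<in> carrier R"
    and yc: "y \<in> carrier R" and \<phi>c: "\<And>k. k \<in> insert m T \<Longrightarrow> \<phi> (insert m T - {k}) \<in> carrier M"
  shows "kdiff R M (x(m:=y)) \<phi> (insert m T) =
    signed M (card {j\<in>T. j<m}) (y \<odot>\<^bsub>M\<^esub> \<phi> T \<ominus>\<^bsub>M\<^esub> kdiff R M x (cochain_contract M m \<phi>) T)"
proof -
  define c where "c = card {j\<in>T. j<m}"
  define t where "t k = signed M (card {j \<in> insert m T. j < k}) ((x(m:=y)) k \<odot>\<^bsub>M\<^esub> \<phi> (insert m T - {k}))"
    for k
  have \<phi>T: "\<phi> T \<in> carrier M" using \<phi>c[of m] mT by (simp add: insert_Diff_if)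
  have face: "insert m T - {k} = insert m (T - {k})" if "k \<in> T" for k using that mT by auto
  have contr_c: "cochain_contract M m \<phi> (T - {k}) \<in> carrier M" if "k \<in> T" for k
    using \<phi>c[of k] that by (simp add: cochain_contract_def face)
  have tc: "t \<in> T \<rightarrow> carrier M" unfolding t_def using xc \<phi>c mT by auto
  have tm: "t m = signed M c (y \<odot>\<^bsub>M\<^esub> \<phi> T)"
    using card_less_insert[OF fin mT, of m] mT by (simp add: t_def c_def insert_Diff_if)
  have tk: "t k = signed M (Suc c) (signed M (card {j\<in>T. j<k}) (x k \<odot>\<^bsub>M\<^esub> cochain_contract M m \<phi> (T - {k})))"
    if k: "k \<in> T" for k
  proof -
    define c' where "c' = card {j\<in>T-{k}. j<m}"
    have km: "k \<noteq> m" using k mT by auto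
    have "\<phi> (insert m (T - {k})) = signed M c' (cochain_contract M m \<phi> (T - {k}))"
      using \<phi>c[of k] k by (simp add: cochain_contract_def face c'_def)
    then have "t k = signed M (card {j \<in> insert m T. j < k} + c')
                  (x k \<odot>\<^bsub>M\<^esub> cochain_contract M m \<phi> (T - {k}))"
      unfolding t_def using xc[OF k] contr_c[OF k] km
      by (simp add: face[OF k] signed_smult[symmetric] signed_signed del: insert_Diff_single)
    also have "\<dots> = signed M (Suc c + card {j\<in>T. j<k}) (x k \<odot>\<^bsub>M\<^esub> cochain_contract M m \<phi> (T - {k}))"
      using card_less_insert[OF fin mT, of k] card_less_remove[OF fin k, of m] km
      by (intro signed_parity_cong) (auto simp: c_def c'_def)
    finally show ?thesis using xc[OF k] contr_c[OF k] by (simp add: signed_signed)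
  qed
  have "kdiff R M (x(m:=y)) \<phi> (insert m T) = t m \<oplus>\<^bsub>M\<^esub> finsum M t T"
    unfolding kdiff_def t_def[symmetric] using fin mT tc tm \<phi>T yc by (simp add: Pi_def)
  also have "finsum M t T =
      (\<Oplus>\<^bsub>M\<^esub>k\<in>T. signed M (Suc c) (signed M (card {j\<in>T. j<k}) (x k \<odot>\<^bsub>M\<^esub> cochain_contract M m \<phi> (T - {k}))))"
    using tk xc contr_c by (intro M.finsum_cong') auto
  also have "\<dots> = signed M (Suc c) (kdiff R M x (cochain_contract M m \<phi>) T)"
    unfolding kdiff_def using fin xc contr_c by (intro finsum_signed) auto
  finally have "kdiff R M (x(m:=y)) \<phi> (insert m T) =
      t m \<oplus>\<^bsub>M\<^esub> signed M (Suc c) (kdiff R M x (cochain_contract M m \<phi>) T)" .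
  then show ?thesis
    using kdiff_closed[of T x "cochain_contract M m \<phi>"] xc contr_c \<phi>T yc
    by (simp add: tm signed_Suc signed_add signed_uminus a_minus_def c_def)
qed

lemma kdiff_glue_notin:
  assumes "finite I" "m \<notin> I" "x ` I \<subseteq> carrier R" "kcochain M I j \<phi>\<^sub>1"
    "T \<subseteq> I" "card T = Suc j"
  shows "kdiff R M (x(m:=y)) (cochain_glue M m \<phi>\<^sub>1 \<phi>\<^sub>2) T = kdiff R M x \<phi>\<^sub>1 T"
proof -
  have "m \<notin> T - {k}" for k using assms(2,5) by auto
  then show ?thesis using assms kcochain_face[OF assms(1,4,5,6)] by (intro kdiff_cong) auto
qed

lemma kdiff_glue_insert:
  assumes fin: "finite I" and mI: "m \<notin> I" and xc: "x ` I \<subseteq> carrier R"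
    and yc: "y \<in> carrier R" and \<phi>\<^sub>1: "kcochain M I i \<phi>\<^sub>1" and \<phi>\<^sub>2: "kcochain M I (i - 1) \<phi>\<^sub>2"
    and T: "T \<subseteq> I" "card T = i"
  shows "kdiff R M (x(m:=y)) (cochain_glue M m \<phi>\<^sub>1 \<phi>\<^sub>2) (insert m T) =
    signed M (card {j\<in>T. j<m}) (y \<odot>\<^bsub>M\<^esub> \<phi>\<^sub>1 T \<ominus>\<^bsub>M\<^esub> kdiff R M x \<phi>\<^sub>2 T)"
proof -
  have fT: "finite T" and mT: "m \<notin> T" using T fin mI finite_subset by auto
  have \<phi>\<^sub>2c: "\<phi>\<^sub>2 (T - {k}) \<in> carrier M" if "k \<in> T" for k
    using kcochain_face_pred[OF fin \<phi>\<^sub>2 T that] .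
  have "kdiff R M x (cochain_contract M m (cochain_glue M m \<phi>\<^sub>1 \<phi>\<^sub>2)) T = kdiff R M x \<phi>\<^sub>2 T"
    using xc T \<phi>\<^sub>2c mT by (intro kdiff_cong) (auto simp: cochain_contract_glue)
  moreover have "cochain_glue M m \<phi>\<^sub>1 \<phi>\<^sub>2 (insert m T - {k}) \<in> carrier M" if "k \<in> insert m T" for k
    using kcochain_glue[OF fin mI \<phi>\<^sub>1 \<phi>\<^sub>2] T fT mT that
    by (intro kcochain_face[of "insert m I" i]) (auto simp: fin)
  ultimately show ?thesis
    using kdiff_insert_upd[OF fT mT _ yc, of x "cochain_glue M m \<phi>\<^sub>1 \<phi>\<^sub>2"] xc T mT by auto
qed

end

definition koszul_ann :: "('r,'c) ring_scheme \<Rightarrow> ('r,'m,'e) module_scheme \<Rightarrow> nat set \<Rightarrow> (nat \<Rightarrow> 'r)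
    \<Rightarrow> nat \<Rightarrow> 'r set" where
  "koszul_ann R M I x g =
     {a \<in> carrier R. \<forall>\<phi>. kcocycle R M I x g \<phi> \<longrightarrow> kcoboundary R M I x g (\<lambda>S. a \<odot>\<^bsub>M\<^esub> \<phi> S)}"

context module
begin

lemma koszul_ann_ideal:
  assumes fin: "finite I" and xc: "x ` I \<subseteq> carrier R"
  shows "ideal (koszul_ann R M I x g) R"
proof -
  let ?N = "koszul_ann R M I x g"
  have val: "\<phi> S \<in> carrier M" if "kcocycle R M I x g \<phi>" "S \<subseteq> I" "card S = g" for \<phi> S
    using that by (auto simp: kcocycle_def kcochain_def)
  have sub: "?N \<subseteq> carrier R" by (auto simp: koszul_ann_def)
  have add: "a \<oplus> b \<in> ?N" if a: "a \<in> ?N" and b: "b \<in> ?N" for a b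
  proof -
    have ab: "a \<in> carrier R" "b \<in> carrier R" using a b sub by auto
    have "kcoboundary R M I x g (\<lambda>S. (a \<oplus> b) \<odot>\<^bsub>M\<^esub> \<phi> S)" if "kcocycle R M I x g \<phi>" for \<phi>
    proof (rule kcoboundary_cong)
      show "kcoboundary R M I x g (\<lambda>S. a \<odot>\<^bsub>M\<^esub> \<phi> S \<oplus>\<^bsub>M\<^esub> b \<odot>\<^bsub>M\<^esub> \<phi> S)"
        using a b that by (intro kcoboundary_add[OF fin xc]) (auto simp: koszul_ann_def)
    qed (use ab val[OF that] in \<open>auto simp: smult_l_distr\<close>)
    then show ?thesis using a b by (auto simp: koszul_ann_def)
  qed
  have mult: "r \<otimes> a \<in> ?N" if a: "a \<in> ?N" and r: "r \<in> carrier R" for a r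
  proof -
    have ac: "a \<in> carrier R" using a sub by auto
    have "kcoboundary R M I x g (\<lambda>S. (r \<otimes> a) \<odot>\<^bsub>M\<^esub> \<phi> S)" if "kcocycle R M I x g \<phi>" for \<phi>
    proof (rule kcoboundary_cong)
      show "kcoboundary R M I x g (\<lambda>S. r \<odot>\<^bsub>M\<^esub> (a \<odot>\<^bsub>M\<^esub> \<phi> S))"
        using a that by (intro kcoboundary_smult[OF fin xc r]) (auto simp: koszul_ann_def)
    qed (use ac r val[OF that] in \<open>auto simp: smult_assoc1\<close>)
    then show ?thesis using a r sub by (auto simp: koszul_ann_def)
  qed
  have zero: "\<zero> \<in> ?N"
  proof -
    have "kcoboundary R M I x g (\<lambda>S. \<zero> \<odot>\<^bsub>M\<^esub> \<phi> S)" if "kcocycle R M I x g \<phi>" for \<phi>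
      by (rule kcoboundary_cong[OF kcoboundary_zero[OF xc]]) (use val[OF that] in \<open>auto simp: smult_l_null\<close>)
    then show ?thesis by (simp add: koszul_ann_def)
  qed
  have uminus: "\<ominus> a \<in> ?N" if "a \<in> ?N" for a
    using mult[OF that, of "\<ominus> \<one>"] that sub by (auto simp: l_minus)
  show ?thesis
  proof (rule idealI)
    show "subgroup ?N (add_monoid R)"
      by (rule subgroup.intro) (auto simp: sub add zero uminus a_inv_def[symmetric])
    show "a \<otimes> r \<in> ?N" if "a \<in> ?N" "r \<in> carrier R" for a r
      using mult[OF that] that sub by (metis m_comm subsetD)
  qed (auto simp: ring_axioms mult)
qed

lemma kcocycle_restrict:
  assumes fin: "finite I" and mI: "m \<notin> I" and xc: "x ` I \<subseteq> carrier R"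
    and \<phi>: "kcocycle R M (insert m I) (x(m:=y)) i \<phi>"
  shows "kcocycle R M I x i \<phi>"
proof -
  have ch: "kcochain M I i \<phi>" using \<phi> kcochain_mono by (auto simp: kcocycle_def)
  have "kdiff R M x \<phi> T = \<zero>\<^bsub>M\<^esub>" if T: "T \<subseteq> I" "card T = Suc i" for T
  proof -
    have "kdiff R M x \<phi> T = kdiff R M (x(m:=y)) \<phi> T"
      using T mI xc kcochain_face[OF fin ch T] by (intro kdiff_upd_notin[symmetric]) auto
    also have "\<dots> = \<zero>\<^bsub>M\<^esub>" using \<phi> T by (auto simp: kcocycle_def)
    finally show ?thesis .
  qed
  then show ?thesis using ch by (simp add: kcocycle_def)
qed

lemma kcoboundary_restrict:
  assumes fin: "finite I" and mI: "m \<notin> I" and xc: "x ` I \<subseteq> carrier R"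
    and \<phi>: "kcoboundary R M (insert m I) (x(m:=y)) i \<phi>"
  shows "kcoboundary R M I x i \<phi>"
proof -
  obtain \<psi> where \<psi>: "kcochain M (insert m I) (i - 1) \<psi>"
    and eq: "\<And>S. S \<subseteq> insert m I \<Longrightarrow> card S = i \<Longrightarrow> \<phi> S = kdiff R M (x(m:=y)) \<psi> S"
    using \<phi> unfolding kcoboundary_def by metis
  have \<psi>I: "kcochain M I (i - 1) \<psi>" using \<psi> by (rule kcochain_mono) auto
  have "\<phi> S = kdiff R M x \<psi> S" if S: "S \<subseteq> I" "card S = i" for S
  proof -
    have "m \<notin> S" "\<And>k. k \<in> S \<Longrightarrow> x k \<in> carrier R" using S mI xc by auto
    then show ?thesis
      using eq[of S] S kcochain_face_pred[OF fin \<psi>I S] kdiff_upd_notin[of m S x \<psi> y] by auto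
  qed
  then show ?thesis using \<psi>I unfolding kcoboundary_def by blast
qed

text \<open>On faces avoiding \<open>k\<close>, contraction with \<open>k\<close> is a null-homotopy of multiplication by \<open>x k\<close>.\<close>

lemma kcocycle_smult_eq_kdiff_contract:
  assumes fin: "finite I" and xc: "x ` I \<subseteq> carrier R" and k: "k \<in> I"
    and \<phi>: "kcocycle R M I x g \<phi>" and S: "S \<subseteq> I" "k \<notin> S" "card S = g"
  shows "x k \<odot>\<^bsub>M\<^esub> \<phi> S = kdiff R M x (cochain_contract M k \<phi>) S"
proof -
  have fS: "finite S" using S fin finite_subset by blast
  have ch: "kcochain M I g \<phi>" using \<phi> by (simp add: kcocycle_def)
  have kS: "insert k S \<subseteq> I" "card (insert k S) = Suc g" using S k fS by auto
  have faces: "\<phi> (insert k S - {j}) \<in> carrier M" if "j \<in> insert k S" for j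
    using kcochain_face[OF fin ch kS that] .
  have contr: "cochain_contract M k \<phi> (S - {j}) \<in> carrier M" if "j \<in> S" for j
  proof -
    have "insert k S - {j} = insert k (S - {j})" using that S(2) by auto
    then show ?thesis using faces[of j] that by (simp add: cochain_contract_def)
  qed
  have "signed M (card {j\<in>S. j<k}) (x k \<odot>\<^bsub>M\<^esub> \<phi> S \<ominus>\<^bsub>M\<^esub> kdiff R M x (cochain_contract M k \<phi>) S)
      = kdiff R M x \<phi> (insert k S)"
    using kdiff_insert_upd[OF fS S(2), of x "x k" \<phi>] faces xc S(1) k by (auto simp: subset_iff)
  also have "\<dots> = \<zero>\<^bsub>M\<^esub>" using \<phi> kS by (simp add: kcocycle_def)
  finally show ?thesis
    using faces[of k] xc k kdiff_closed[of S x "cochain_contract M k \<phi>"] contr S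
    by (simp add: signed_eq_zero_iff M.a_minus_eq_zero_iff subset_iff)
qed

lemma kcocycle_smult_eq_kdiff_homotopy:
  assumes fin: "finite I" and xc: "x ` I \<subseteq> carrier R" and k: "k \<in> I"
    and \<phi>: "kcocycle R M I x (Suc i) \<phi>" and S: "S \<subseteq> I" "card S = Suc i"
  shows "x k \<odot>\<^bsub>M\<^esub> \<phi> S = kdiff R M x (cochain_glue M k (cochain_contract M k \<phi>) (\<lambda>S. \<zero>\<^bsub>M\<^esub>)) S"
proof -
  let ?h = "cochain_glue M k (cochain_contract M k \<phi>) (\<lambda>S. \<zero>\<^bsub>M\<^esub>)"
  have I: "insert k (I - {k}) = I" "finite (I - {k})" "k \<notin> I - {k}" using k fin by auto
  have contr: "kcochain M (I - {k}) i (cochain_contract M k \<phi>)"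
    using kcochain_contract[OF I(2,3)] \<phi> I(1) by (simp add: kcocycle_def)
  have zero: "kcochain M (I - {k}) (i - 1) (\<lambda>S. \<zero>\<^bsub>M\<^esub>)" by (simp add: kcochain_def)
  show ?thesis
  proof (cases "k \<in> S")
    case False
    have "kdiff R M (x(k := x k)) ?h S = kdiff R M x (cochain_contract M k \<phi>) S"
      by (rule kdiff_glue_notin[OF I(2,3) _ contr]) (use S xc False in auto)
    then show ?thesis using kcocycle_smult_eq_kdiff_contract[OF fin xc k \<phi> S(1) False S(2)] by simp
  next
    case True
    define T where "T = S - {k}"
    have T: "T \<subseteq> I - {k}" "card T = i" "S = insert k T"
      using S True finite_subset[OF S(1) fin] by (auto simp: T_def)
    have "kdiff R M (x(k := x k)) ?h (insert k T) =
        signed M (card {j\<in>T. j<k}) (x k \<odot>\<^bsub>M\<^esub> cochain_contract M k \<phi> T \<ominus>\<^bsub>M\<^esub> kdiff R M x (\<lambda>S. \<zero>\<^bsub>M\<^esub>) T)"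
      by (rule kdiff_glue_insert[OF I(2,3) _ _ contr zero T(1,2)]) (use xc k in auto)
    moreover have "kdiff R M x (\<lambda>S. \<zero>\<^bsub>M\<^esub>) T = \<zero>\<^bsub>M\<^esub>" using T(1) xc by (intro kdiff_zero) auto
    moreover have "x k \<in> carrier R" "\<phi> S \<in> carrier M" using xc k \<phi> S by (auto simp: kcocycle_def kcochain_def)
    ultimately show ?thesis using T(3) by (simp add: cochain_contract_def a_minus_def signed_smult)
  qed
qed

lemma gen_mem_koszul_ann:
  assumes fin: "finite I" and xc: "x ` I \<subseteq> carrier R" and k: "k \<in> I"
  shows "x k \<in> koszul_ann R M I x g"
proof -
  have "kcoboundary R M I x g (\<lambda>S. x k \<odot>\<^bsub>M\<^esub> \<phi> S)" if \<phi>: "kcocycle R M I x g \<phi>" for \<phi>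
  proof (cases g)
    case 0
    then show ?thesis
      using kcocycle_smult_eq_kdiff_contract[OF fin xc k \<phi>, of "{}"] by (simp add: kcoboundary_0_iff[OF fin])
  next
    case (Suc i)
    have "kcochain M I i (cochain_glue M k (cochain_contract M k \<phi>) (\<lambda>S. \<zero>\<^bsub>M\<^esub>))"
      using kcochain_glue[of "I - {k}" k i] kcochain_contract[of "I - {k}" k i \<phi>] \<phi> Suc k fin
      by (simp add: kcocycle_def kcochain_def insert_absorb)
    then show ?thesis
      using kcocycle_smult_eq_kdiff_homotopy[OF fin xc k] \<phi> Suc unfolding kcoboundary_def by auto
  qed
  then show ?thesis using xc k by (auto simp: koszul_ann_def)
qed

lemma genideal_subset_koszul_ann:
  assumes "finite I" "x ` I \<subseteq> carrier R"
  shows "genideal R (x ` I) \<subseteq> koszul_ann R M I x g"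
  using assms gen_mem_koszul_ann by (intro genideal_minimal koszul_ann_ideal) auto

lemma kcocycle_cone_residual:
  assumes fin: "finite I" and mI: "m \<notin> I" and xc: "x ` I \<subseteq> carrier R"
    and yc: "y \<in> carrier R" and \<phi>: "kcocycle R M (insert m I) (x(m:=y)) (Suc i) \<phi>"
    and \<psi>: "kcochain M I i \<psi>" and eq: "\<And>S. S \<subseteq> I \<Longrightarrow> card S = Suc i \<Longrightarrow> \<phi> S = kdiff R M x \<psi> S"
  shows "kcocycle R M I x i (\<lambda>S. y \<odot>\<^bsub>M\<^esub> \<psi> S \<ominus>\<^bsub>M\<^esub> cochain_contract M m \<phi> S)"
proof -
  have ch: "kcochain M (insert m I) (Suc i) \<phi>" using \<phi> by (simp add: kcocycle_def)
  have contr: "kcochain M I i (cochain_contract M m \<phi>)" by (rule kcochain_contract[OF fin mI ch])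
  have "kdiff R M x (\<lambda>S. y \<odot>\<^bsub>M\<^esub> \<psi> S \<ominus>\<^bsub>M\<^esub> cochain_contract M m \<phi> S) T = \<zero>\<^bsub>M\<^esub>"
    if T: "T \<subseteq> I" "card T = Suc i" for T
  proof -
    have fT: "finite T" and mT: "m \<notin> T" using T fin mI finite_subset by auto
    have xT: "\<And>k. k \<in> T \<Longrightarrow> x k \<in> carrier R" using T xc by auto
    note \<psi>T = kcochain_face[OF fin \<psi> T] and cT = kcochain_face[OF fin contr T]
    have mT': "insert m T \<subseteq> insert m I" "card (insert m T) = Suc (Suc i)" using T fT mT by auto
    have "kdiff R M x (\<lambda>S. y \<odot>\<^bsub>M\<^esub> \<psi> S \<oplus>\<^bsub>M\<^esub> \<ominus>\<^bsub>M\<^esub> cochain_contract M m \<phi> S) T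
        = kdiff R M x (\<lambda>S. y \<odot>\<^bsub>M\<^esub> \<psi> S) T \<oplus>\<^bsub>M\<^esub> kdiff R M x (\<lambda>S. \<ominus>\<^bsub>M\<^esub> cochain_contract M m \<phi> S) T"
      by (rule kdiff_add) (use fT xT \<psi>T cT yc in auto)
    also have "\<dots> = y \<odot>\<^bsub>M\<^esub> kdiff R M x \<psi> T \<ominus>\<^bsub>M\<^esub> kdiff R M x (cochain_contract M m \<phi>) T"
      using kdiff_smult[of T y x \<psi>] kdiff_uminus[of T x "cochain_contract M m \<phi>"] fT xT \<psi>T cT yc
      by (simp add: a_minus_def)
    also have "\<dots> = y \<odot>\<^bsub>M\<^esub> \<phi> T \<ominus>\<^bsub>M\<^esub> kdiff R M x (cochain_contract M m \<phi>) T" using eq T by simp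
    also have "\<dots> = \<zero>\<^bsub>M\<^esub>"
    proof -
      have "T \<subseteq> insert m I" using T by auto
      then have "\<phi> T \<in> carrier M" using ch T(2) by (simp add: kcochain_def)
      then have v: "y \<odot>\<^bsub>M\<^esub> \<phi> T \<ominus>\<^bsub>M\<^esub> kdiff R M x (cochain_contract M m \<phi>) T \<in> carrier M"
        using yc xT cT kdiff_closed[of T x] by (simp add: a_minus_def)
      have "\<phi> (insert m T - {k}) \<in> carrier M" if "k \<in> insert m T" for k
        using kcochain_face[OF _ ch mT' that] fin by simp
      then have "signed M (card {j\<in>T. j<m}) (y \<odot>\<^bsub>M\<^esub> \<phi> T \<ominus>\<^bsub>M\<^esub> kdiff R M x (cochain_contract M m \<phi>) T)
          = kdiff R M (x(m:=y)) \<phi> (insert m T)"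
        by (intro kdiff_insert_upd[symmetric] fT mT xT yc)
      also have "\<dots> = \<zero>\<^bsub>M\<^esub>" using \<phi> mT' by (simp add: kcocycle_def)
      finally show ?thesis using v by (simp add: signed_eq_zero_iff)
    qed
    finally show ?thesis by (simp add: a_minus_def)
  qed
  moreover have "kcochain M I i (\<lambda>S. y \<odot>\<^bsub>M\<^esub> \<psi> S \<ominus>\<^bsub>M\<^esub> cochain_contract M m \<phi> S)"
    using \<psi> contr yc by (auto simp: kcochain_def a_minus_def)
  ultimately show ?thesis by (simp add: kcocycle_def)
qed

lemma kcoboundary_glueI:
  assumes fin: "finite I" and mI: "m \<notin> I" and xc: "x ` I \<subseteq> carrier R"
    and yc: "y \<in> carrier R" and \<phi>: "kcochain M (insert m I) (Suc i) \<phi>"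
    and \<psi>\<^sub>1: "kcochain M I i \<psi>\<^sub>1" and \<psi>\<^sub>2: "kcochain M I (i - 1) \<psi>\<^sub>2"
    and eq\<^sub>1: "\<And>S. S \<subseteq> I \<Longrightarrow> card S = Suc i \<Longrightarrow> \<phi> S = kdiff R M x \<psi>\<^sub>1 S"
    and eq\<^sub>2: "\<And>S. S \<subseteq> I \<Longrightarrow> card S = i \<Longrightarrow>
      y \<odot>\<^bsub>M\<^esub> \<psi>\<^sub>1 S \<ominus>\<^bsub>M\<^esub> cochain_contract M m \<phi> S = kdiff R M x \<psi>\<^sub>2 S"
  shows "kcoboundary R M (insert m I) (x(m:=y)) (Suc i) \<phi>"
proof -
  have "\<phi> S = kdiff R M (x(m:=y)) (cochain_glue M m \<psi>\<^sub>1 \<psi>\<^sub>2) S"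
    if S: "S \<subseteq> insert m I" "card S = Suc i" for S
  proof (cases "m \<in> S")
    case False
    then have SI: "S \<subseteq> I" using S by auto
    have "kdiff R M (x(m:=y)) (cochain_glue M m \<psi>\<^sub>1 \<psi>\<^sub>2) S = kdiff R M x \<psi>\<^sub>1 S"
      by (rule kdiff_glue_notin[OF fin mI xc \<psi>\<^sub>1 SI S(2)])
    then show ?thesis using eq\<^sub>1[OF SI S(2)] by simp
  next
    case True
    define T where "T = S - {m}"
    have T: "T \<subseteq> I" "card T = i" "S = insert m T"
      using S True finite_subset[OF S(1)] fin by (auto simp: T_def)
    have c: "\<psi>\<^sub>1 T \<in> carrier M" "cochain_contract M m \<phi> T \<in> carrier M"
      using \<psi>\<^sub>1 kcochain_contract[OF fin mI \<phi>] T by (auto simp: kcochain_def)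
    have "kdiff R M (x(m:=y)) (cochain_glue M m \<psi>\<^sub>1 \<psi>\<^sub>2) S =
        signed M (card {j\<in>T. j<m}) (y \<odot>\<^bsub>M\<^esub> \<psi>\<^sub>1 T \<ominus>\<^bsub>M\<^esub> kdiff R M x \<psi>\<^sub>2 T)"
      using kdiff_glue_insert[OF fin mI xc yc \<psi>\<^sub>1 \<psi>\<^sub>2 T(1,2)] T(3) by simp
    also have "\<dots> = signed M (card {j\<in>T. j<m}) (cochain_contract M m \<phi> T)"
      using eq\<^sub>2[OF T(1,2), symmetric] c yc by (simp add: M.a_minus_minus_cancel)
    also have "\<dots> = \<phi> S"
      using \<phi> S T(3) by (simp add: cochain_contract_def kcochain_def)
    finally show ?thesis by simp
  qed
  then show ?thesis using kcochain_glue[OF fin mI \<psi>\<^sub>1 \<psi>\<^sub>2] unfolding kcoboundary_def by auto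
qed

lemma kcohom_vanishing_insert:
  assumes fin: "finite I" and mI: "m \<notin> I" and xc: "x ` I \<subseteq> carrier R"
    and yc: "y \<in> carrier R" and below: "\<And>j. j < g \<Longrightarrow> \<not> kcohom_nonzero R M I x j" and "i < g"
  shows "\<not> kcohom_nonzero R M (insert m I) (x(m:=y)) i"
proof
  assume "kcohom_nonzero R M (insert m I) (x(m:=y)) i"
  then obtain \<phi> where \<phi>: "kcocycle R M (insert m I) (x(m:=y)) i \<phi>"
    and not_cobd: "\<not> kcoboundary R M (insert m I) (x(m:=y)) i \<phi>" by (auto simp: kcohom_nonzero_def)
  have "kcoboundary R M I x i \<phi>"
    using kcocycle_restrict[OF fin mI xc \<phi>] below \<open>i < g\<close> by (auto simp: kcohom_nonzero_def)
  then obtain \<psi>\<^sub>1 where \<psi>\<^sub>1: "kcochain M I (i - 1) \<psi>\<^sub>1"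
    and eq\<^sub>1: "\<And>S. S \<subseteq> I \<Longrightarrow> card S = i \<Longrightarrow> \<phi> S = kdiff R M x \<psi>\<^sub>1 S"
    unfolding kcoboundary_def by metis
  have "kcoboundary R M (insert m I) (x(m:=y)) i \<phi>"
  proof (cases i)
    case 0
    then show ?thesis using eq\<^sub>1[of "{}"] fin by (simp add: kcoboundary_0_iff)
  next
    case (Suc i')
    have "kcocycle R M I x i' (\<lambda>S. y \<odot>\<^bsub>M\<^esub> \<psi>\<^sub>1 S \<ominus>\<^bsub>M\<^esub> cochain_contract M m \<phi> S)"
      using kcocycle_cone_residual[OF fin mI xc yc] \<phi> \<psi>\<^sub>1 eq\<^sub>1 Suc by simp
    then have "kcoboundary R M I x i' (\<lambda>S. y \<odot>\<^bsub>M\<^esub> \<psi>\<^sub>1 S \<ominus>\<^bsub>M\<^esub> cochain_contract M m \<phi> S)"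
      using below \<open>i < g\<close> Suc by (auto simp: kcohom_nonzero_def)
    then obtain \<psi>\<^sub>2 where "kcochain M I (i' - 1) \<psi>\<^sub>2"
      "\<And>S. S \<subseteq> I \<Longrightarrow> card S = i' \<Longrightarrow>
        y \<odot>\<^bsub>M\<^esub> \<psi>\<^sub>1 S \<ominus>\<^bsub>M\<^esub> cochain_contract M m \<phi> S = kdiff R M x \<psi>\<^sub>2 S"
      unfolding kcoboundary_def by metis
    then show ?thesis
      using kcoboundary_glueI[OF fin mI xc yc] \<phi> \<psi>\<^sub>1 eq\<^sub>1 Suc by (simp add: kcocycle_def)
  qed
  with not_cobd show False ..
qed

lemma kcohom_nonzero_insert:
  assumes fin: "finite I" and mI: "m \<notin> I" and xc: "x ` I \<subseteq> carrier R"
    and y: "y \<in> koszul_ann R M I x g" and nonzero: "kcohom_nonzero R M I x g"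
  shows "kcohom_nonzero R M (insert m I) (x(m:=y)) g"
proof -
  have yc: "y \<in> carrier R" using y by (simp add: koszul_ann_def)
  obtain \<phi> where \<phi>: "kcocycle R M I x g \<phi>" and not_cobd: "\<not> kcoboundary R M I x g \<phi>"
    using nonzero by (auto simp: kcohom_nonzero_def)
  obtain \<psi> where \<psi>: "kcochain M I (g - 1) \<psi>"
    and eq: "\<And>S. S \<subseteq> I \<Longrightarrow> card S = g \<Longrightarrow> y \<odot>\<^bsub>M\<^esub> \<phi> S = kdiff R M x \<psi> S"
    using y \<phi> unfolding koszul_ann_def kcoboundary_def by auto
  have ch: "kcochain M I g \<phi>" using \<phi> by (simp add: kcocycle_def)
  have "kdiff R M (x(m:=y)) (cochain_glue M m \<phi> \<psi>) T = \<zero>\<^bsub>M\<^esub>"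
    if T: "T \<subseteq> insert m I" "card T = Suc g" for T
  proof (cases "m \<in> T")
    case False
    then have TI: "T \<subseteq> I" using T by auto
    have "kdiff R M (x(m:=y)) (cochain_glue M m \<phi> \<psi>) T = kdiff R M x \<phi> T"
      by (rule kdiff_glue_notin[OF fin mI xc ch TI T(2)])
    then show ?thesis using \<phi> TI T(2) by (simp add: kcocycle_def)
  next
    case True
    define T' where "T' = T - {m}"
    have T': "T' \<subseteq> I" "card T' = g" "T = insert m T'"
      using T True finite_subset[OF T(1)] fin by (auto simp: T'_def)
    have "kdiff R M x \<psi> T' \<in> carrier M"
      using kdiff_closed[of T' x \<psi>] xc T' kcochain_face_pred[OF fin \<psi> T'(1,2)] by auto
    then show ?thesis
      using kdiff_glue_insert[OF fin mI xc yc ch \<psi> T'(1,2)] eq[OF T'(1,2)] T'(3) by (simp add: M.r_neg a_minus_def)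
  qed
  then have "kcocycle R M (insert m I) (x(m:=y)) g (cochain_glue M m \<phi> \<psi>)"
    using kcochain_glue[OF fin mI ch \<psi>] by (simp add: kcocycle_def)
  moreover have "\<not> kcoboundary R M (insert m I) (x(m:=y)) g (cochain_glue M m \<phi> \<psi>)"
  proof
    assume "kcoboundary R M (insert m I) (x(m:=y)) g (cochain_glue M m \<phi> \<psi>)"
    then have "kcoboundary R M I x g (cochain_glue M m \<phi> \<psi>)" by (rule kcoboundary_restrict[OF fin mI xc])
    then have "kcoboundary R M I x g \<phi>" by (rule kcoboundary_cong) (metis cochain_glue_notin mI subsetD)
    with not_cobd show False ..
  qed
  ultimately show ?thesis by (auto simp: kcohom_nonzero_def)
qed

lemma kgrade_on_insert_genideal:
  assumes fin: "finite I" and mI: "m \<notin> I" and xc: "x ` I \<subseteq> carrier R"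
    and y: "y \<in> genideal R (x ` I)"
  shows "kgrade_on R M (insert m I) (x(m:=y)) = kgrade_on R M I x"
  unfolding kgrade_on_def
proof (rule INF_enat_cong)
  have ann: "\<And>g. y \<in> koszul_ann R M I x g" using genideal_subset_koszul_ann[OF fin xc] y by blast
  then have yc: "y \<in> carrier R" by (simp add: koszul_ann_def)
  show "(\<forall>j<g. \<not> kcohom_nonzero R M (insert m I) (x(m:=y)) j) \<longleftrightarrow> (\<forall>j<g. \<not> kcohom_nonzero R M I x j)" for g
    using kcohom_vanishing_insert[OF fin mI xc yc] kcohom_nonzero_insert[OF fin mI xc ann] by blast
qed

lemma kgrade_on_le_insert:
  assumes "finite I" "m \<notin> I" "x ` I \<subseteq> carrier R" "y \<in> carrier R"
  shows "kgrade_on R M I x \<le> kgrade_on R M (insert m I) (x(m:=y))"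
  unfolding kgrade_on_def using kcohom_vanishing_insert[OF assms] by (intro INF_enat_mono) blast

end

section \<open>Relabelling generators and the grade of a sequence\<close>

context module
begin

lemma kgrade_on_cong:
  assumes fin: "finite I" and xc: "x ` I \<subseteq> carrier R" and eq: "\<And>k. k \<in> I \<Longrightarrow> x k = x' k"
  shows "kgrade_on R M I x = kgrade_on R M I x'"
proof -
  have kdiff_eq: "kdiff R M x \<psi> T = kdiff R M x' \<psi> T"
    if "kcochain M I (j - 1) \<psi>" "T \<subseteq> I" "card T = j" for \<psi> T j
    using that eq xc kcochain_face_pred[OF fin that] by (intro kdiff_cong) auto
  have "kcocycle R M I x i \<phi> \<longleftrightarrow> kcocycle R M I x' i \<phi>" for i \<phi>
    using kdiff_eq[of "Suc i"] by (auto simp: kcocycle_def)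
  moreover have "kcoboundary R M I x i \<phi> \<longleftrightarrow> kcoboundary R M I x' i \<phi>" for i \<phi>
    using kdiff_eq[of i] unfolding kcoboundary_def by metis
  ultimately show ?thesis by (simp add: kgrade_on_def kcohom_nonzero_def)
qed

lemma kcochain_image:
  assumes "inj h"
  shows "kcochain M (h ` I) j \<phi> \<longleftrightarrow> kcochain M I j (\<lambda>U. \<phi> (h ` U))"
proof -
  have "card (h ` U) = card U" for U using assms by (simp add: card_image inj_on_subset)
  then show ?thesis by (auto simp: kcochain_def subset_image_iff)
qed

lemma kdiff_image:
  assumes h: "strict_mono h" and fin: "finite T" and zc: "z ` h ` T \<subseteq> carrier R"
    and \<phi>c: "\<And>k. k \<in> T \<Longrightarrow> \<phi> (h ` (T - {k})) \<in> carrier M"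
  shows "kdiff R M z \<phi> (h ` T) = kdiff R M (z \<circ> h) (\<lambda>U. \<phi> (h ` U)) T"
proof -
  have inj: "inj h" using h by (rule strict_mono_imp_inj_on)
  have "{j \<in> h ` T. j < h k} = h ` {j\<in>T. j<k}" for k using strict_mono_less[OF h] by auto
  then have card: "card {j \<in> h ` T. j < h k} = card {j\<in>T. j<k}" for k
    using inj by (simp add: card_image inj_on_subset)
  have face: "h ` T - {h k} = h ` (T - {k})" for k using inj by (auto simp: inj_eq)
  have injT: "inj_on h T" using inj by (rule inj_on_subset) simp
  have terms: "(\<lambda>k. signed M (card {j \<in> h ` T. j < k}) (z k \<odot>\<^bsub>M\<^esub> \<phi> (h ` T - {k}))) \<in> h ` T \<rightarrow> carrier M"
  proof
    fix k' assume "k' \<in> h ` T"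
    then obtain k where k: "k \<in> T" "k' = h k" by blast
    moreover have "z (h k) \<in> carrier R" using zc k(1) by auto
    ultimately show "signed M (card {j \<in> h ` T. j < k'}) (z k' \<odot>\<^bsub>M\<^esub> \<phi> (h ` T - {k'})) \<in> carrier M"
      using \<phi>c[OF k(1)] by (simp add: face)
  qed
  have "kdiff R M z \<phi> (h ` T) =
      (\<Oplus>\<^bsub>M\<^esub>k\<in>T. signed M (card {j \<in> h ` T. j < h k}) (z (h k) \<odot>\<^bsub>M\<^esub> \<phi> (h ` T - {h k})))"
    unfolding kdiff_def by (rule M.finsum_reindex[OF terms injT])
  then show ?thesis by (simp add: kdiff_def card face)
qed

lemma kdiff_image_kcochain:
  assumes h: "strict_mono h" and fin: "finite I" and zc: "z ` h ` I \<subseteq> carrier R"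
    and \<psi>: "kcochain M I (j - 1) (\<lambda>U. \<psi> (h ` U))" and U: "U \<subseteq> I" "card U = j"
  shows "kdiff R M z \<psi> (h ` U) = kdiff R M (z \<circ> h) (\<lambda>U. \<psi> (h ` U)) U"
proof -
  have "z ` h ` U \<subseteq> carrier R" using zc U(1) by blast
  then show ?thesis
    using kcochain_face_pred[OF fin \<psi> U] finite_subset[OF U(1) fin] by (intro kdiff_image[OF h]) auto
qed

lemma kcocycle_image:
  assumes h: "strict_mono h" and fin: "finite I" and zc: "z ` h ` I \<subseteq> carrier R"
  shows "kcocycle R M (h ` I) z i \<phi> \<longleftrightarrow> kcocycle R M I (z \<circ> h) i (\<lambda>U. \<phi> (h ` U))"
proof (cases "kcochain M I i (\<lambda>U. \<phi> (h ` U))")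
  case True
  have inj: "inj h" using h by (rule strict_mono_imp_inj_on)
  have "card (h ` U) = card U" for U using inj by (simp add: card_image inj_on_subset)
  then have "(\<forall>S. S \<subseteq> h ` I \<and> card S = Suc i \<longrightarrow> kdiff R M z \<phi> S = \<zero>\<^bsub>M\<^esub>) \<longleftrightarrow>
      (\<forall>U. U \<subseteq> I \<and> card U = Suc i \<longrightarrow> kdiff R M (z \<circ> h) (\<lambda>U. \<phi> (h ` U)) U = \<zero>\<^bsub>M\<^esub>)"
    using kdiff_image_kcochain[OF h fin zc, of "Suc i" \<phi>] True
    unfolding subset_image_iff by (metis diff_Suc_1 image_mono)
  then show ?thesis using True by (simp add: kcocycle_def kcochain_image[OF inj])
qed (simp add: kcocycle_def kcochain_image[OF strict_mono_imp_inj_on[OF h]])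

lemma kcoboundary_image:
  assumes h: "strict_mono h" and fin: "finite I" and zc: "z ` h ` I \<subseteq> carrier R"
  shows "kcoboundary R M (h ` I) z i \<phi> \<longleftrightarrow> kcoboundary R M I (z \<circ> h) i (\<lambda>U. \<phi> (h ` U))"
proof
  have inj: "inj h" using h by (rule strict_mono_imp_inj_on)
  then have card: "card (h ` U) = card U" for U by (simp add: card_image inj_on_subset)
  note kdiff_eq = kdiff_image_kcochain[OF h fin zc]
  {
    assume "kcoboundary R M (h ` I) z i \<phi>"
    then obtain \<psi> where "kcochain M I (i - 1) (\<lambda>U. \<psi> (h ` U))"
      "\<And>S. S \<subseteq> h ` I \<Longrightarrow> card S = i \<Longrightarrow> \<phi> S = kdiff R M z \<psi> S"
      by (auto simp: kcoboundary_def kcochain_image[OF inj])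
    then show "kcoboundary R M I (z \<circ> h) i (\<lambda>U. \<phi> (h ` U))"
      unfolding kcoboundary_def using kdiff_eq card by (metis image_mono)
  next
    assume "kcoboundary R M I (z \<circ> h) i (\<lambda>U. \<phi> (h ` U))"
    then obtain \<psi> where \<psi>: "kcochain M I (i - 1) \<psi>"
      and eq: "\<And>U. U \<subseteq> I \<Longrightarrow> card U = i \<Longrightarrow> \<phi> (h ` U) = kdiff R M (z \<circ> h) \<psi> U"
      by (auto simp: kcoboundary_def)
    let ?\<psi> = "\<lambda>S. \<psi> (inv_into UNIV h ` S)"
    have \<psi>': "(\<lambda>U. ?\<psi> (h ` U)) = \<psi>" by (simp add: image_inv_f_f[OF inj])
    have "\<phi> S = kdiff R M z ?\<psi> S" if "S \<subseteq> h ` I" "card S = i" for S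
      using that eq kdiff_eq[of _ ?\<psi>] \<psi> \<psi>' by (auto simp: subset_image_iff card)
    moreover have "kcochain M (h ` I) (i - 1) ?\<psi>" using \<psi> \<psi>' by (simp add: kcochain_image[OF inj])
    ultimately show "kcoboundary R M (h ` I) z i \<phi>" unfolding kcoboundary_def by blast
  }
qed

lemma kcohom_nonzero_image:
  assumes h: "strict_mono h" and fin: "finite I" and zc: "z ` h ` I \<subseteq> carrier R"
  shows "kcohom_nonzero R M (h ` I) z i \<longleftrightarrow> kcohom_nonzero R M I (z \<circ> h) i"
proof
  note cocycle = kcocycle_image[OF h fin zc] and coboundary = kcoboundary_image[OF h fin zc]
  show "kcohom_nonzero R M I (z \<circ> h) i" if "kcohom_nonzero R M (h ` I) z i"
    using that by (auto simp: kcohom_nonzero_def cocycle coboundary)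
  assume "kcohom_nonzero R M I (z \<circ> h) i"
  then obtain \<phi> where "kcocycle R M I (z \<circ> h) i \<phi>" "\<not> kcoboundary R M I (z \<circ> h) i \<phi>"
    by (auto simp: kcohom_nonzero_def)
  moreover have "(\<lambda>U. \<phi> (inv_into UNIV h ` h ` U)) = \<phi>"
    by (simp add: image_inv_f_f[OF strict_mono_imp_inj_on[OF h]])
  ultimately show "kcohom_nonzero R M (h ` I) z i"
    unfolding kcohom_nonzero_def using cocycle[of _ "\<lambda>S. \<phi> (inv_into UNIV h ` S)"]
      coboundary[of _ "\<lambda>S. \<phi> (inv_into UNIV h ` S)"] by auto
qed

lemma kgrade_on_image:
  "strict_mono h \<Longrightarrow> finite I \<Longrightarrow> z ` h ` I \<subseteq> carrier R \<Longrightarrow> kgrade_on R M (h ` I) z = kgrade_on R M I (z \<circ> h)"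
  by (simp add: kgrade_on_def kcohom_nonzero_image)

lemma kgrade_on_union_genideal:
  assumes K: "finite K" and fin: "finite I" and disj: "I \<inter> K = {}" and xc: "x ` I \<subseteq> carrier R"
    and gen: "x ` K \<subseteq> genideal R (x ` I)"
  shows "kgrade_on R M (I \<union> K) x = kgrade_on R M I x"
  using K disj gen
proof (induction K rule: finite_induct)
  case (insert m K)
  have "x ` K \<subseteq> carrier R" using insert.prems(2) ideal.Icarr[OF genideal_ideal[OF xc]] by blast
  then have xc': "x ` (I \<union> K) \<subseteq> carrier R" using xc by auto
  have "x m \<in> genideal R (x ` (I \<union> K))"
    using insert.prems(2) subset_Idl_subset[OF xc', of "x ` I"] by auto
  then have "kgrade_on R M (insert m (I \<union> K)) (x(m := x m)) = kgrade_on R M (I \<union> K) x"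
    using insert.hyps insert.prems(1) fin by (intro kgrade_on_insert_genideal[OF _ _ xc']) auto
  then show ?case using insert by simp
qed simp

lemma kgrade_on_le_union:
  assumes K: "finite K" and fin: "finite I" and disj: "I \<inter> K = {}" and xc: "x ` (I \<union> K) \<subseteq> carrier R"
  shows "kgrade_on R M I x \<le> kgrade_on R M (I \<union> K) x"
  using K disj xc
proof (induction K rule: finite_induct)
  case (insert m K)
  then have "kgrade_on R M (I \<union> K) x \<le> kgrade_on R M (insert m (I \<union> K)) (x(m := x m))"
    using fin by (intro kgrade_on_le_insert) auto
  then show ?case using insert by simp
qed simp

lemma koszul_d_eq_kdiff: "koszul_d R M xs = kdiff R M ((!) xs)"
  by (intro ext) (simp add: koszul_d_def kdiff_def signed_def)

lemma koszul_grade_seq_eq_kgrade_on: "koszul_grade_seq R xs M = kgrade_on R M {..<length xs} ((!) xs)"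
proof -
  have "koszul_cocycle R M xs i \<phi> \<longleftrightarrow> kcocycle R M {..<length xs} ((!) xs) i \<phi>" for i \<phi>
    by (simp add: koszul_cocycle_def kcocycle_def koszul_cochain_def kcochain_def koszul_d_eq_kdiff)
  moreover have "koszul_coboundary R M xs i \<phi> \<longleftrightarrow> kcoboundary R M {..<length xs} ((!) xs) i \<phi>" for i \<phi>
  proof (cases "i = 0")
    case True
    have "S \<subseteq> {..<length xs} \<and> card S = 0 \<longleftrightarrow> S = {}" for S by (auto dest: finite_subset)
    then show ?thesis using True by (simp add: koszul_coboundary_def kcoboundary_0_iff)
  qed (simp add: koszul_coboundary_def kcoboundary_def koszul_cochain_def kcochain_def koszul_d_eq_kdiff)
  ultimately show ?thesis
    by (simp add: koszul_grade_seq_def kgrade_on_def koszul_cohom_nonzero_def kcohom_nonzero_def)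
qed

text \<open>Run both sequences side by side as \<open>xs @ ys\<close>: appending \<open>ys\<close> can only raise the grade,
  and then the \<open>xs\<close> part is redundant because it lies in the ideal generated by \<open>ys\<close>.\<close>

lemma koszul_grade_seq_mono:
  assumes xs: "set xs \<subseteq> carrier R" and ys: "set ys \<subseteq> carrier R"
    and sub: "genideal R (set xs) \<subseteq> genideal R (set ys)"
  shows "koszul_grade_seq R xs M \<le> koszul_grade_seq R ys M"
proof -
  define n where "n = length xs"
  define p where "p = length ys"
  let ?z = "(!) (xs @ ys)"
  have "k \<in> (+) n ` {..<p}" if "n \<le> k" "k < n + p" for k
    using that by (intro image_eqI[of _ _ "k - n"]) auto
  then have shift: "(+) n ` {..<p} = {n..<n + p}" by auto
  have xs_part: "?z ` {..<n} = set xs" by (force simp: n_def nth_append set_conv_nth)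
  have "?z ` {n..<n + p} = (!) ys ` {..<p}"
    unfolding shift[symmetric] image_image by (simp add: n_def nth_append)
  then have ys_part: "?z ` {n..<n + p} = set ys" by (auto simp: p_def set_conv_nth)
  have "koszul_grade_seq R xs M = kgrade_on R M {..<n} ?z"
    unfolding koszul_grade_seq_eq_kgrade_on n_def using xs
    by (intro kgrade_on_cong) (auto simp: nth_append)
  also have "\<dots> \<le> kgrade_on R M ({..<n} \<union> {n..<n + p}) ?z"
    by (rule kgrade_on_le_union) (use xs_part ys_part xs ys in \<open>auto simp: image_Un\<close>)
  also have "\<dots> = kgrade_on R M ({n..<n + p} \<union> {..<n}) ?z" by (simp only: Un_commute)
  also have "\<dots> = kgrade_on R M {n..<n + p} ?z"
    using xs ys sub genideal_self[OF xs] xs_part ys_part by (intro kgrade_on_union_genideal) auto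
  also have "\<dots> = kgrade_on R M {..<p} (?z \<circ> (+) n)"
    using ys_part ys by (simp add: shift[symmetric] kgrade_on_image strict_mono_def)
  also have "\<dots> = koszul_grade_seq R ys M"
    unfolding koszul_grade_seq_eq_kgrade_on p_def using ys
    by (intro kgrade_on_cong) (auto simp: n_def nth_append)
  finally show ?thesis .
qed

lemma kgrade_fg_genideal:
  assumes "set xs \<subseteq> carrier R"
  shows "kgrade_fg R (genideal R (set xs)) M = koszul_grade_seq R xs M"
proof -
  define ys where "ys = (SOME ys. set ys \<subseteq> carrier R \<and> genideal R (set ys) = genideal R (set xs))"
  have "set ys \<subseteq> carrier R \<and> genideal R (set ys) = genideal R (set xs)"
    unfolding ys_def by (rule someI[of _ xs]) (use assms in simp)
  then show ?thesis
    using koszul_grade_seq_mono[of xs ys] koszul_grade_seq_mono[of ys xs] assms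
    by (simp add: kgrade_fg_def ys_def[symmetric])
qed

end

section \<open>The amalgamation as a module over \<open>A\<close>\<close>

locale amalgamation =
  fixes A :: "'a ring" and B :: "'b ring" and f :: "'a \<Rightarrow> 'b" and J :: "'b set"
  assumes cring_A: "cring A" and cring_B: "cring B" and f_hom: "f \<in> ring_hom A B"
    and ideal_J: "ideal J B"

sublocale amalgamation \<subseteq> A: cring A by (rule cring_A)
sublocale amalgamation \<subseteq> B: cring B by (rule cring_B)
sublocale amalgamation \<subseteq> J: ideal J B by (rule ideal_J)
sublocale amalgamation \<subseteq> f: ring_hom_cring A B f
  by (intro ring_hom_cringI cring_A cring_B f_hom)

context amalgamation
begin

abbreviation "AJ \<equiv> amalg A B f J"
abbreviation "iota a \<equiv> (a, f a)"

definition jpart :: "'a \<times> 'b \<Rightarrow> 'b" where "jpart u = snd u \<ominus>\<^bsub>B\<^esub> f (fst u)"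

lemma amalg_simps [simp]:
  "u \<otimes>\<^bsub>AJ\<^esub> v = (fst u \<otimes>\<^bsub>A\<^esub> fst v, snd u \<otimes>\<^bsub>B\<^esub> snd v)"
  "u \<oplus>\<^bsub>AJ\<^esub> v = (fst u \<oplus>\<^bsub>A\<^esub> fst v, snd u \<oplus>\<^bsub>B\<^esub> snd v)"
  "\<zero>\<^bsub>AJ\<^esub> = (\<zero>\<^bsub>A\<^esub>, \<zero>\<^bsub>B\<^esub>)"
  "\<one>\<^bsub>AJ\<^esub> = (\<one>\<^bsub>A\<^esub>, \<one>\<^bsub>B\<^esub>)"
  by (simp_all add: amalg_def)

lemma jpart_mk: "a \<in> carrier A \<Longrightarrow> j \<in> carrier B \<Longrightarrow> jpart (a, f a \<oplus>\<^bsub>B\<^esub> j) = j"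
  by (simp add: jpart_def a_minus_def B.a_ac B.r_neg B.r_neg2)

lemma jpart_zero [simp]: "jpart (\<zero>\<^bsub>A\<^esub>, \<zero>\<^bsub>B\<^esub>) = \<zero>\<^bsub>B\<^esub>"
  by (simp add: jpart_def a_minus_def)

lemma amalg_carrier_iff:
  "u \<in> carrier AJ \<longleftrightarrow> fst u \<in> carrier A \<and> snd u \<in> carrier B \<and> jpart u \<in> J"
proof
  assume "u \<in> carrier AJ"
  then obtain a j where "u = (a, f a \<oplus>\<^bsub>B\<^esub> j)" "a \<in> carrier A" "j \<in> J" by (auto simp: amalg_def)
  then show "fst u \<in> carrier A \<and> snd u \<in> carrier B \<and> jpart u \<in> J" using J.Icarr by (auto simp: jpart_mk)
next
  assume u: "fst u \<in> carrier A \<and> snd u \<in> carrier B \<and> jpart u \<in> J"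
  then have "u = (fst u, f (fst u) \<oplus>\<^bsub>B\<^esub> jpart u)"
    by (simp add: jpart_def a_minus_def B.a_ac B.r_neg B.r_neg2 B.l_neg)
  then show "u \<in> carrier AJ" using u unfolding amalg_def by auto
qed

lemma amalg_memI: "a \<in> carrier A \<Longrightarrow> j \<in> J \<Longrightarrow> (a, f a \<oplus>\<^bsub>B\<^esub> j) \<in> carrier AJ"
  by (auto simp: amalg_def)

lemma iota_mem: "a \<in> carrier A \<Longrightarrow> iota a \<in> carrier AJ"
  using amalg_memI[of a "\<zero>\<^bsub>B\<^esub>"] by simp

lemma amalg_eqI:
  assumes "u \<in> carrier AJ" "v \<in> carrier AJ" "fst u = fst v" "jpart u = jpart v"
  shows "u = v"
proof -
  have "snd w = f (fst w) \<oplus>\<^bsub>B\<^esub> jpart w" if "w \<in> carrier AJ" for w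
    using that by (simp add: amalg_carrier_iff jpart_def a_minus_def B.a_ac B.r_neg B.r_neg2 B.l_neg)
  then show ?thesis using assms by (metis prod.collapse)
qed

lemma amalg_add_closed:
  assumes "u \<in> carrier AJ" "v \<in> carrier AJ"
  shows "u \<oplus>\<^bsub>AJ\<^esub> v \<in> carrier AJ"
proof -
  obtain a j b k where u: "u = (a, f a \<oplus>\<^bsub>B\<^esub> j)" "a \<in> carrier A" "j \<in> J"
    and v: "v = (b, f b \<oplus>\<^bsub>B\<^esub> k)" "b \<in> carrier A" "k \<in> J"
    using assms by (auto simp: amalg_def)
  then have "u \<oplus>\<^bsub>AJ\<^esub> v = (a \<oplus>\<^bsub>A\<^esub> b, f (a \<oplus>\<^bsub>A\<^esub> b) \<oplus>\<^bsub>B\<^esub> (j \<oplus>\<^bsub>B\<^esub> k))"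
    using J.Icarr by (simp add: B.a_ac)
  then show ?thesis using u v amalg_memI[of "a \<oplus>\<^bsub>A\<^esub> b" "j \<oplus>\<^bsub>B\<^esub> k"] by simp
qed

lemma amalg_mult_closed:
  assumes "u \<in> carrier AJ" "v \<in> carrier AJ"
  shows "u \<otimes>\<^bsub>AJ\<^esub> v \<in> carrier AJ"
proof -
  obtain a j b k where u: "u = (a, f a \<oplus>\<^bsub>B\<^esub> j)" "a \<in> carrier A" "j \<in> J"
    and v: "v = (b, f b \<oplus>\<^bsub>B\<^esub> k)" "b \<in> carrier A" "k \<in> J"
    using assms by (auto simp: amalg_def)
  then have "u \<otimes>\<^bsub>AJ\<^esub> v = (a \<otimes>\<^bsub>A\<^esub> b, f (a \<otimes>\<^bsub>A\<^esub> b) \<oplus>\<^bsub>B\<^esub> (f a \<otimes>\<^bsub>B\<^esub> k \<oplus>\<^bsub>B\<^esub> j \<otimes>\<^bsub>B\<^esub> (f b \<oplus>\<^bsub>B\<^esub> k)))"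
    using J.Icarr by (simp add: B.l_distr B.r_distr B.a_ac)
  moreover have "f a \<otimes>\<^bsub>B\<^esub> k \<oplus>\<^bsub>B\<^esub> j \<otimes>\<^bsub>B\<^esub> (f b \<oplus>\<^bsub>B\<^esub> k) \<in> J"
    using u v J.Icarr by (intro J.a_closed J.I_l_closed J.I_r_closed) auto
  ultimately show ?thesis
    using u v amalg_memI[of "a \<otimes>\<^bsub>A\<^esub> b" "f a \<otimes>\<^bsub>B\<^esub> k \<oplus>\<^bsub>B\<^esub> j \<otimes>\<^bsub>B\<^esub> (f b \<oplus>\<^bsub>B\<^esub> k)"] by simp
qed

lemma cring_amalg: "cring AJ"
proof (rule cringI)
  show "abelian_group AJ"
  proof (rule abelian_groupI)
    fix u assume u: "u \<in> carrier AJ"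
    then have "jpart (\<ominus>\<^bsub>A\<^esub> fst u, \<ominus>\<^bsub>B\<^esub> snd u) = \<ominus>\<^bsub>B\<^esub> jpart u"
      by (simp add: amalg_carrier_iff jpart_def a_minus_def B.minus_add)
    then have "(\<ominus>\<^bsub>A\<^esub> fst u, \<ominus>\<^bsub>B\<^esub> snd u) \<in> carrier AJ"
      using u by (simp add: amalg_carrier_iff)
    then show "\<exists>w\<in>carrier AJ. w \<oplus>\<^bsub>AJ\<^esub> u = \<zero>\<^bsub>AJ\<^esub>"
      using u by (intro bexI[of _ "(\<ominus>\<^bsub>A\<^esub> fst u, \<ominus>\<^bsub>B\<^esub> snd u)"]) (auto simp: amalg_carrier_iff A.l_neg B.l_neg)
  qed (use amalg_add_closed amalg_memI[of "\<zero>\<^bsub>A\<^esub>" "\<zero>\<^bsub>B\<^esub>"] in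
      \<open>auto simp: amalg_carrier_iff A.a_ac B.a_ac\<close>)
  show "comm_monoid AJ"
    by (rule comm_monoidI)
      (use amalg_mult_closed iota_mem[of "\<one>\<^bsub>A\<^esub>"] in \<open>auto simp: amalg_carrier_iff A.m_ac B.m_ac\<close>)
qed (auto simp: amalg_carrier_iff A.l_distr B.l_distr)

abbreviation "MA \<equiv> ring_module A"
abbreviation "MJ \<equiv> ideal_module A B f J"
abbreviation "MAJ \<equiv> ring_module AJ"

lemma ideal_module_simps [simp]:
  "carrier MJ = J" "u \<oplus>\<^bsub>MJ\<^esub> v = u \<oplus>\<^bsub>B\<^esub> v" "\<zero>\<^bsub>MJ\<^esub> = \<zero>\<^bsub>B\<^esub>" "a \<odot>\<^bsub>MJ\<^esub> v = f a \<otimes>\<^bsub>B\<^esub> v"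
  by (simp_all add: ideal_module_def)

lemma module_ideal_module: "module A MJ"
proof (rule moduleI)
  show "abelian_group MJ"
  proof (rule abelian_groupI)
    fix u assume "u \<in> carrier MJ"
    then show "\<exists>w\<in>carrier MJ. w \<oplus>\<^bsub>MJ\<^esub> u = \<zero>\<^bsub>MJ\<^esub>"
      using J.Icarr by (intro bexI[of _ "\<ominus>\<^bsub>B\<^esub> u"]) (auto simp: B.l_neg)
  qed (auto simp: J.Icarr B.a_ac)
qed (auto simp: cring_A J.Icarr B.l_distr B.r_distr B.m_assoc intro: J.I_l_closed)

lemma iota_ring_hom: "iota \<in> ring_hom A AJ"
  by (rule ring_hom_memI) (auto simp: iota_mem)

lemma fst_abelian_group_hom: "abelian_group_hom MAJ MA fst"
  using module_ring_module[OF cring_amalg] module_ring_module[OF cring_A]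
  by (intro abelian_group_homI') (auto simp: module_def amalg_carrier_iff)

lemma jpart_abelian_group_hom: "abelian_group_hom MAJ MJ jpart"
  using module_ring_module[OF cring_amalg] module_ideal_module
  by (intro abelian_group_homI')
    (auto simp: module_def amalg_carrier_iff jpart_def a_minus_def B.minus_add B.a_ac)

lemma fst_kdiff:
  assumes "finite T" "x ` T \<subseteq> carrier A" "\<And>k. k \<in> T \<Longrightarrow> \<Phi> (T - {k}) \<in> carrier AJ"
  shows "fst (kdiff AJ MAJ (iota \<circ> x) \<Phi> T) = kdiff A MA x (fst \<circ> \<Phi>) T"
  using assms cring.cring_simprules(5)[OF cring_amalg] iota_mem
  by (subst kdiff_hom[OF fst_abelian_group_hom]) (auto simp: comp_def amalg_carrier_iff)

lemma jpart_kdiff: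
  assumes "finite T" "x ` T \<subseteq> carrier A" "\<And>k. k \<in> T \<Longrightarrow> \<Phi> (T - {k}) \<in> carrier AJ"
  shows "jpart (kdiff AJ MAJ (iota \<circ> x) \<Phi> T) = kdiff A MJ x (jpart \<circ> \<Phi>) T"
proof -
  have "jpart (iota a \<otimes>\<^bsub>AJ\<^esub> u) = f a \<otimes>\<^bsub>B\<^esub> jpart u" if "a \<in> carrier A" "u \<in> carrier AJ" for a u
    using that by (simp add: amalg_carrier_iff jpart_def a_minus_def B.r_distr B.r_minus)
  then show ?thesis
    using assms cring.cring_simprules(5)[OF cring_amalg] iota_mem
    by (subst kdiff_hom[OF jpart_abelian_group_hom]) (auto simp: comp_def)
qed

definition amalg_cochain :: "(nat set \<Rightarrow> 'a) \<Rightarrow> (nat set \<Rightarrow> 'b) \<Rightarrow> nat set \<Rightarrow> 'a \<times> 'b" where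
  "amalg_cochain \<phi> \<psi> S = (\<phi> S, f (\<phi> S) \<oplus>\<^bsub>B\<^esub> \<psi> S)"

lemma kcochain_amalg_cochain:
  "kcochain MA I i \<phi> \<Longrightarrow> kcochain MJ I i \<psi> \<Longrightarrow> kcochain MAJ I i (amalg_cochain \<phi> \<psi>)"
  by (auto simp: kcochain_def amalg_cochain_def intro: amalg_memI)

lemma kcochain_components:
  "kcochain MAJ I i \<Phi> \<Longrightarrow> kcochain MA I i (fst \<circ> \<Phi>) \<and> kcochain MJ I i (jpart \<circ> \<Phi>)"
  by (auto simp: kcochain_def amalg_carrier_iff)

lemma jpart_amalg_cochain: "\<phi> S \<in> carrier A \<Longrightarrow> \<psi> S \<in> J \<Longrightarrow> jpart (amalg_cochain \<phi> \<psi> S) = \<psi> S"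
  using J.Icarr by (simp add: amalg_cochain_def jpart_mk)

lemma amalg_eq_iff: "u \<in> carrier AJ \<Longrightarrow> v \<in> carrier AJ \<Longrightarrow> u = v \<longleftrightarrow> fst u = fst v \<and> jpart u = jpart v"
  using amalg_eqI by blast

section \<open>Koszul cohomology over the amalgamation\<close>

lemma kdiff_amalg_components:
  assumes fin: "finite I" and xc: "x ` I \<subseteq> carrier A" and \<Psi>: "kcochain MAJ I (j - 1) \<Psi>"
    and S: "S \<subseteq> I" "card S = j"
  shows "fst (kdiff AJ MAJ (iota \<circ> x) \<Psi> S) = kdiff A MA x (fst \<circ> \<Psi>) S"
    and "jpart (kdiff AJ MAJ (iota \<circ> x) \<Psi> S) = kdiff A MJ x (jpart \<circ> \<Psi>) S"
    and "kdiff AJ MAJ (iota \<circ> x) \<Psi> S \<in> carrier AJ"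
proof -
  interpret MAJ: module AJ MAJ by (rule module_ring_module[OF cring_amalg])
  have fS: "finite S" and xS: "x ` S \<subseteq> carrier A" using S fin xc finite_subset by auto
  note faces = MAJ.kcochain_face_pred[OF fin \<Psi> S]
  show "fst (kdiff AJ MAJ (iota \<circ> x) \<Psi> S) = kdiff A MA x (fst \<circ> \<Psi>) S"
    by (rule fst_kdiff) (use fS xS faces in auto)
  show "jpart (kdiff AJ MAJ (iota \<circ> x) \<Psi> S) = kdiff A MJ x (jpart \<circ> \<Psi>) S"
    by (rule jpart_kdiff) (use fS xS faces in auto)
  show "kdiff AJ MAJ (iota \<circ> x) \<Psi> S \<in> carrier AJ"
    using MAJ.kdiff_closed[of S "iota \<circ> x" \<Psi>] xS faces iota_mem by auto
qed

lemma kcocycle_amalg_iff: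
  assumes fin: "finite I" and xc: "x ` I \<subseteq> carrier A" and \<Phi>: "kcochain MAJ I i \<Phi>"
  shows "kcocycle AJ MAJ I (iota \<circ> x) i \<Phi> \<longleftrightarrow> kcocycle A MA I x i (fst \<circ> \<Phi>) \<and> kcocycle A MJ I x i (jpart \<circ> \<Phi>)"
proof -
  have "kdiff AJ MAJ (iota \<circ> x) \<Phi> T = \<zero>\<^bsub>AJ\<^esub> \<longleftrightarrow>
      kdiff A MA x (fst \<circ> \<Phi>) T = \<zero>\<^bsub>A\<^esub> \<and> kdiff A MJ x (jpart \<circ> \<Phi>) T = \<zero>\<^bsub>B\<^esub>"
    if "T \<subseteq> I" "card T = Suc i" for T
    using kdiff_amalg_components[OF fin xc _ that, of \<Phi>] \<Phi> amalg_eq_iff[of _ "\<zero>\<^bsub>AJ\<^esub>"] iota_mem[of "\<zero>\<^bsub>A\<^esub>"]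
    by simp
  then show ?thesis using \<Phi> kcochain_components[OF \<Phi>] by (auto simp: kcocycle_def)
qed

lemma kcoboundary_amalg_iff:
  assumes fin: "finite I" and xc: "x ` I \<subseteq> carrier A" and \<Phi>: "kcochain MAJ I i \<Phi>"
  shows "kcoboundary AJ MAJ I (iota \<circ> x) i \<Phi> \<longleftrightarrow>
    kcoboundary A MA I x i (fst \<circ> \<Phi>) \<and> kcoboundary A MJ I x i (jpart \<circ> \<Phi>)"
proof
  note components = kdiff_amalg_components[OF fin xc]
  assume "kcoboundary AJ MAJ I (iota \<circ> x) i \<Phi>"
  then obtain \<Psi> where \<Psi>: "kcochain MAJ I (i - 1) \<Psi>"
    and "\<And>S. S \<subseteq> I \<Longrightarrow> card S = i \<Longrightarrow> \<Phi> S = kdiff AJ MAJ (iota \<circ> x) \<Psi> S"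
    unfolding kcoboundary_def by metis
  then show "kcoboundary A MA I x i (fst \<circ> \<Phi>) \<and> kcoboundary A MJ I x i (jpart \<circ> \<Phi>)"
    using kcochain_components[OF \<Psi>] components[OF \<Psi>] unfolding kcoboundary_def by auto
next
  interpret MA: module A MA by (rule module_ring_module[OF cring_A])
  interpret MJ: module A MJ by (rule module_ideal_module)
  note components = kdiff_amalg_components[OF fin xc]
  assume "kcoboundary A MA I x i (fst \<circ> \<Phi>) \<and> kcoboundary A MJ I x i (jpart \<circ> \<Phi>)"
  then obtain \<psi>\<^sub>1 \<psi>\<^sub>2 where \<psi>: "kcochain MA I (i - 1) \<psi>\<^sub>1" "kcochain MJ I (i - 1) \<psi>\<^sub>2"
    and eq: "\<And>S. S \<subseteq> I \<Longrightarrow> card S = i \<Longrightarrow>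
      fst (\<Phi> S) = kdiff A MA x \<psi>\<^sub>1 S \<and> jpart (\<Phi> S) = kdiff A MJ x \<psi>\<^sub>2 S"
    unfolding kcoboundary_def by (metis comp_apply)
  let ?\<Psi> = "amalg_cochain \<psi>\<^sub>1 \<psi>\<^sub>2"
  have \<Psi>: "kcochain MAJ I (i - 1) ?\<Psi>" by (rule kcochain_amalg_cochain[OF \<psi>])
  have "\<Phi> S = kdiff AJ MAJ (iota \<circ> x) ?\<Psi> S" if S: "S \<subseteq> I" "card S = i" for S
  proof (rule amalg_eqI)
    show "\<Phi> S \<in> carrier AJ" using \<Phi> S by (simp add: kcochain_def)
    show "kdiff AJ MAJ (iota \<circ> x) ?\<Psi> S \<in> carrier AJ" by (rule components(3)[OF \<Psi> S])
    show "fst (\<Phi> S) = fst (kdiff AJ MAJ (iota \<circ> x) ?\<Psi> S)"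
      using eq[OF S] components(1)[OF \<Psi> S] by (simp add: comp_def amalg_cochain_def)
    have "kdiff A MJ x (jpart \<circ> ?\<Psi>) S = kdiff A MJ x \<psi>\<^sub>2 S"
      using MA.kcochain_face_pred[OF fin \<psi>(1) S] MJ.kcochain_face_pred[OF fin \<psi>(2) S] S xc
      by (intro MJ.kdiff_cong) (auto simp: jpart_amalg_cochain image_subset_iff subset_iff)
    then show "jpart (\<Phi> S) = jpart (kdiff AJ MAJ (iota \<circ> x) ?\<Psi> S)"
      using eq[OF S] components(2)[OF \<Psi> S] by simp
  qed
  then show "kcoboundary AJ MAJ I (iota \<circ> x) i \<Phi>" using \<Psi> unfolding kcoboundary_def by blast
qed

lemma kcohom_nonzero_amalg_ringI:
  assumes fin: "finite I" and xc: "x ` I \<subseteq> carrier A" and nonzero: "kcohom_nonzero A MA I x i"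
  shows "kcohom_nonzero AJ MAJ I (iota \<circ> x) i"
proof -
  interpret MJ: module A MJ by (rule module_ideal_module)
  obtain \<phi> where \<phi>: "kcocycle A MA I x i \<phi>" "\<not> kcoboundary A MA I x i \<phi>"
    using nonzero by (auto simp: kcohom_nonzero_def)
  let ?\<Phi> = "amalg_cochain \<phi> (\<lambda>S. \<zero>\<^bsub>B\<^esub>)"
  have \<Phi>: "kcochain MAJ I i ?\<Phi>"
    using \<phi>(1) by (intro kcochain_amalg_cochain) (auto simp: kcocycle_def kcochain_def)
  have "kcocycle A MJ I x i (jpart \<circ> ?\<Phi>)"
    using MJ.kcocycle_zero[OF xc] \<phi>(1) MJ.kcocycle_cong[OF fin xc, of i "jpart \<circ> ?\<Phi>" "\<lambda>S. \<zero>\<^bsub>B\<^esub>"]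
    by (auto simp: kcocycle_def kcochain_def jpart_amalg_cochain)
  moreover have "fst \<circ> ?\<Phi> = \<phi>" by (auto simp: amalg_cochain_def)
  ultimately show ?thesis
    using \<phi> kcocycle_amalg_iff[OF fin xc \<Phi>] kcoboundary_amalg_iff[OF fin xc \<Phi>]
    by (auto simp: kcohom_nonzero_def)
qed

lemma kcohom_nonzero_amalg_idealI:
  assumes fin: "finite I" and xc: "x ` I \<subseteq> carrier A" and nonzero: "kcohom_nonzero A MJ I x i"
  shows "kcohom_nonzero AJ MAJ I (iota \<circ> x) i"
proof -
  interpret MA: module A MA by (rule module_ring_module[OF cring_A])
  interpret MJ: module A MJ by (rule module_ideal_module)
  obtain \<phi> where \<phi>: "kcocycle A MJ I x i \<phi>" "\<not> kcoboundary A MJ I x i \<phi>"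
    using nonzero by (auto simp: kcohom_nonzero_def)
  let ?\<Phi> = "amalg_cochain (\<lambda>S. \<zero>\<^bsub>A\<^esub>) \<phi>"
  have \<Phi>: "kcochain MAJ I i ?\<Phi>"
    using \<phi>(1) by (intro kcochain_amalg_cochain) (auto simp: kcocycle_def kcochain_def)
  have eq: "jpart (?\<Phi> S) = \<phi> S" if "S \<subseteq> I" "card S = i" for S
    using \<phi>(1) that by (auto simp: kcocycle_def kcochain_def jpart_amalg_cochain)
  have "kcocycle A MJ I x i (jpart \<circ> ?\<Phi>) \<longleftrightarrow> kcocycle A MJ I x i \<phi>"
    by (rule MJ.kcocycle_cong[OF fin xc]) (simp add: eq)
  moreover have "kcoboundary A MJ I x i (jpart \<circ> ?\<Phi>) \<Longrightarrow> kcoboundary A MJ I x i \<phi>"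
    by (erule MJ.kcoboundary_cong) (simp add: eq)
  moreover have "fst \<circ> ?\<Phi> = (\<lambda>S. \<zero>\<^bsub>A\<^esub>)" by (auto simp: amalg_cochain_def)
  ultimately show ?thesis
    using \<phi> MA.kcocycle_zero[OF xc] kcocycle_amalg_iff[OF fin xc \<Phi>] kcoboundary_amalg_iff[OF fin xc \<Phi>]
    by (auto simp: kcohom_nonzero_def)
qed

lemma kcohom_nonzero_amalg_iff:
  assumes fin: "finite I" and xc: "x ` I \<subseteq> carrier A"
  shows "kcohom_nonzero AJ MAJ I (iota \<circ> x) i \<longleftrightarrow> kcohom_nonzero A MA I x i \<or> kcohom_nonzero A MJ I x i"
proof
  assume "kcohom_nonzero AJ MAJ I (iota \<circ> x) i"
  then obtain \<Phi> where \<Phi>: "kcocycle AJ MAJ I (iota \<circ> x) i \<Phi>" "\<not> kcoboundary AJ MAJ I (iota \<circ> x) i \<Phi>"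
    by (auto simp: kcohom_nonzero_def)
  then have "kcochain MAJ I i \<Phi>" by (simp add: kcocycle_def)
  then show "kcohom_nonzero A MA I x i \<or> kcohom_nonzero A MJ I x i"
    using \<Phi> kcocycle_amalg_iff[OF fin xc] kcoboundary_amalg_iff[OF fin xc] by (auto simp: kcohom_nonzero_def)
qed (use kcohom_nonzero_amalg_ringI[OF assms] kcohom_nonzero_amalg_idealI[OF assms] in blast)

lemma kgrade_on_amalg:
  assumes "finite I" "x ` I \<subseteq> carrier A"
  shows "kgrade_on AJ MAJ I (iota \<circ> x) = min (kgrade_on A MA I x) (kgrade_on A MJ I x)"
proof -
  have "{i. kcohom_nonzero AJ MAJ I (iota \<circ> x) i} = {i. kcohom_nonzero A MA I x i} \<union> {i. kcohom_nonzero A MJ I x i}"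
    using kcohom_nonzero_amalg_iff[OF assms] by auto
  then show ?thesis by (simp add: kgrade_on_def INF_union inf_min)
qed

section \<open>Koszul grade of extended ideals\<close>

lemma genideal_iota_genideal:
  assumes S: "S \<subseteq> carrier A"
  shows "genideal AJ (iota ` genideal A S) = genideal AJ (iota ` S)"
proof -
  interpret AJ: cring AJ by (rule cring_amalg)
  interpret iota: ring_hom_ring A AJ iota
    by (rule ring_hom_ringI2[OF A.ring_axioms AJ.ring_axioms iota_ring_hom])
  have iS: "iota ` S \<subseteq> carrier AJ" using S iota_mem by auto
  have gA: "genideal A S \<subseteq> carrier A" using ideal.Icarr[OF A.genideal_ideal[OF S]] by blast
  have "ideal {a \<in> carrier A. iota a \<in> genideal AJ (iota ` S)} A"
    using iota.ideal_vimage[OF AJ.genideal_ideal[OF iS]] by simp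
  moreover have "S \<subseteq> {a \<in> carrier A. iota a \<in> genideal AJ (iota ` S)}"
    using S AJ.genideal_self[OF iS] by auto
  ultimately have "iota ` genideal A S \<subseteq> genideal AJ (iota ` S)"
    using A.genideal_minimal by blast
  then have "genideal AJ (iota ` genideal A S) \<subseteq> genideal AJ (iota ` S)"
    by (rule AJ.genideal_minimal[OF AJ.genideal_ideal[OF iS]])
  moreover have "genideal AJ (iota ` S) \<subseteq> genideal AJ (iota ` genideal A S)"
    using A.genideal_self[OF S] gA iota_mem by (intro AJ.subset_Idl_subset) auto
  ultimately show ?thesis by blast
qed

lemma koszul_grade_seq_amalg:
  assumes xs: "set xs \<subseteq> carrier A"
  shows "koszul_grade_seq AJ (map iota xs) MAJ =
    min (kgrade_fg A (genideal A (set xs)) MA) (kgrade_fg A (genideal A (set xs)) MJ)"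
proof -
  interpret MA: module A MA by (rule module_ring_module[OF cring_A])
  interpret MJ: module A MJ by (rule module_ideal_module)
  interpret MAJ: module AJ MAJ by (rule module_ring_module[OF cring_amalg])
  have "koszul_grade_seq AJ (map iota xs) MAJ = kgrade_on AJ MAJ {..<length xs} ((!) (map iota xs))"
    by (simp add: MAJ.koszul_grade_seq_eq_kgrade_on)
  also have "\<dots> = kgrade_on AJ MAJ {..<length xs} (iota \<circ> (!) xs)"
    using xs iota_mem by (intro MAJ.kgrade_on_cong) (auto simp: subset_iff)
  also have "\<dots> = min (kgrade_on A MA {..<length xs} ((!) xs)) (kgrade_on A MJ {..<length xs} ((!) xs))"
    using xs by (intro kgrade_on_amalg) (auto simp: subset_iff)
  finally show ?thesis
    using xs by (simp add: MA.kgrade_fg_genideal MJ.kgrade_fg_genideal MA.koszul_grade_seq_eq_kgrade_on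
        MJ.koszul_grade_seq_eq_kgrade_on)
qed

lemma kgrade_fg_ext_ideal:
  assumes "fin_gen_ideal A \<bb>"
  shows "kgrade_fg AJ (ext_ideal A B f J \<bb>) MAJ = min (kgrade_fg A \<bb> MA) (kgrade_fg A \<bb> MJ)"
proof -
  interpret MAJ: module AJ MAJ by (rule module_ring_module[OF cring_amalg])
  obtain xs where xs: "set xs \<subseteq> carrier A" "\<bb> = genideal A (set xs)"
    using assms finite_list by (auto simp: fin_gen_ideal_def)
  then have "ext_ideal A B f J \<bb> = genideal AJ (set (map iota xs))"
    by (simp add: ext_ideal_def genideal_iota_genideal)
  moreover have "set (map iota xs) \<subseteq> carrier AJ" using xs iota_mem by auto
  ultimately show ?thesis
    using MAJ.kgrade_fg_genideal[of "map iota xs"] koszul_grade_seq_amalg[OF xs(1)] xs(2) by simp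
qed

lemma fin_gen_subideal_ext_ideal:
  assumes \<aa>: "ideal \<aa> A" and \<cc>: "fin_gen_ideal AJ \<cc>" "\<cc> \<subseteq> ext_ideal A B f J \<aa>"
  obtains ts xs where "set ts \<subseteq> carrier AJ" "\<cc> = genideal AJ (set ts)" "set xs \<subseteq> \<aa>"
    "genideal AJ (set ts) \<subseteq> genideal AJ (set (map iota xs))"
proof -
  interpret AJ: cring AJ by (rule cring_amalg)
  obtain S where S: "finite S" "S \<subseteq> carrier AJ" "\<cc> = genideal AJ S"
    using \<cc>(1) by (auto simp: fin_gen_ideal_def)
  obtain ts where "set ts = S" using finite_list[OF S(1)] by blast
  with S have ts: "set ts \<subseteq> carrier AJ" "\<cc> = genideal AJ (set ts)" by auto
  have \<aa>c: "\<aa> \<subseteq> carrier A" using ideal.Icarr[OF \<aa>] by blast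
  have "set ts \<subseteq> genideal AJ (iota ` \<aa>)" using \<cc>(2) ts AJ.genideal_self by (auto simp: ext_ideal_def)
  then obtain Y where Y: "Y \<subseteq> iota ` \<aa>" "finite Y" "set ts \<subseteq> genideal AJ Y"
    using AJ.genideal_finite_subset[of "iota ` \<aa>" "set ts"] \<aa>c iota_mem by blast
  obtain xs where xs: "set xs \<subseteq> \<aa>" "Y = iota ` set xs"
    using finite_subset_image[OF Y(2,1)] finite_list by metis
  have "genideal AJ (set ts) \<subseteq> genideal AJ (set (map iota xs))"
    using Y xs \<aa>c iota_mem by (intro AJ.genideal_minimal[OF AJ.genideal_ideal]) auto
  with ts xs(1) show ?thesis using that by blast
qed

lemma kgrade_ext_ideal_le:
  assumes \<aa>: "ideal \<aa> A"
  shows "kgrade AJ (ext_ideal A B f J \<aa>) MAJ \<le> min (kgrade A \<aa> MA) (kgrade A \<aa> MJ)"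
  unfolding kgrade_def[of AJ]
proof (rule SUP_least)
  interpret MAJ: module AJ MAJ by (rule module_ring_module[OF cring_amalg])
  fix \<cc> assume "\<cc> \<in> {\<cc>. \<cc> \<subseteq> ext_ideal A B f J \<aa> \<and> fin_gen_ideal AJ \<cc>}"
  then obtain ts xs where ts: "set ts \<subseteq> carrier AJ" "\<cc> = genideal AJ (set ts)" and xs: "set xs \<subseteq> \<aa>"
    and sub: "genideal AJ (set ts) \<subseteq> genideal AJ (set (map iota xs))"
    using fin_gen_subideal_ext_ideal[OF \<aa>] by blast
  define \<bb> where "\<bb> = genideal A (set xs)"
  have xsc: "set xs \<subseteq> carrier A" using xs ideal.Icarr[OF \<aa>] by blast
  then have "kgrade_fg AJ \<cc> MAJ \<le> koszul_grade_seq AJ (map iota xs) MAJ"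
    using ts sub iota_mem MAJ.koszul_grade_seq_mono[of ts "map iota xs"] by (auto simp: MAJ.kgrade_fg_genideal)
  also have "\<dots> = min (kgrade_fg A \<bb> MA) (kgrade_fg A \<bb> MJ)"
    unfolding \<bb>_def by (rule koszul_grade_seq_amalg[OF xsc])
  also have "\<dots> \<le> min (kgrade A \<aa> MA) (kgrade A \<aa> MJ)"
  proof -
    have "\<bb> \<subseteq> \<aa>" "fin_gen_ideal A \<bb>"
      using A.genideal_minimal[OF \<aa> xs] xsc by (auto simp: \<bb>_def fin_gen_ideal_def)
    then show ?thesis unfolding kgrade_def by (intro min.mono SUP_upper) auto
  qed
  finally show "kgrade_fg AJ \<cc> MAJ \<le> min (kgrade A \<aa> MA) (kgrade A \<aa> MJ)" .
qed

end

theorem lemma3p1: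
  fixes A :: "'a ring" and B :: "'b ring" and f :: "'a \<Rightarrow> 'b" and J :: "'b set"
  assumes "cring A" and "cring B" and "f \<in> ring_hom A B" and "ideal J B"
  shows "(\<forall>\<bb>. fin_gen_ideal A \<bb> \<longrightarrow>
            kgrade_fg (amalg A B f J) (ext_ideal A B f J \<bb>) (ring_module (amalg A B f J))
              = min (kgrade_fg A \<bb> (ring_module A)) (kgrade_fg A \<bb> (ideal_module A B f J)))
       \<and> (\<forall>\<aa>. ideal \<aa> A \<longrightarrow>
            kgrade (amalg A B f J) (ext_ideal A B f J \<aa>) (ring_module (amalg A B f J))
              \<le> min (kgrade A \<aa> (ring_module A)) (kgrade A \<aa> (ideal_module A B f J)))"
proof -
  interpret amalgamation A B f J using assms by (rule amalgamation.intro)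
  show ?thesis using kgrade_fg_ext_ideal kgrade_ext_ideal_le by blast
qed

end
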